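(* Fix a half-integer $j\ge \tfrac12$ and a real number $l\in(0,1)$, and let $W_{j,l}$ be the effective Bianchi IX potential defined in the context, viewed as a function of $(q^0,q^+,q^-)$. Let $q^0_1\in\mathbb{R}$ and let $(q^+(q^0),q^-(q^0),\pi_+(q^0),\pi_-(q^0))$ be a solution, defined for all $q^0\le q^0_1$, of the internal-time equations of motion \[ \frac{dq^\pm}{dq^0}=\frac{\pi_\pm}{2\sqrt{h}},\qquad \frac{d\pi_\pm}{dq^0}=-\frac{1}{\sqrt{h}}\frac{\partial W_{j,l}}{\partial q^\pm},\qquad h:=\tfrac12(\pi_+^2+\pi_-^2)+2W_{j,l}(q^0,q^+,q^-), \] with $h>0$ along the solution. Then $R(q^0):=\sqrt{(q^+(q^0))^2+(q^-(q^0))^2}$ does not remain bounded as $q^0\to-\infty$; i.e., there is no $q^0_2\le q^0_1$ such that $R$ is bounded on $(-\infty,q^0_2]$.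
   Context: Effective potential. For $0<l<1$ define, for $q>0$, \[ F_l(q)=\Big(\tfrac{2l(l+1)(l+2)}{3}\Big)^{\frac{1}{l-1}}\Big[(l+1)\{(q+1)^{l+2}-|q-1|^{l+2}\}-(l+2)\,q\,\{(q+1)^{l+1}-\mathrm{sgn}(q-1)|q-1|^{l+1}\}\Big]^{\frac{1}{1-l}} . \] (It satisfies $F_l(q)\to q^{-1}$ behaviour for $q\gg1$ and $F_l(q)\approx (3q/(l+1))^{1/(1-l)}$ for $0<q\ll1$.) For $\mu=(\mu_1,\mu_2,\mu_3)$ with all $\mu_I>0$ define, for $\{I,J,K\}=\{1,2,3\}$, \[ \Gamma_I=\tfrac12\big(\mu_K F_l(\mu_J)+\mu_J F_l(\mu_K)-\mu_J\mu_K F_l(\mu_I)^2\big), \] and \[ W_{j,l}(\mu)=8j^2\big[\mu_1\mu_2(\Gamma_1\Gamma_2-\Gamma_3)+\mu_2\mu_3(\Gamma_2\Gamma_3-\Gamma_1)+\mu_3\mu_1(\Gamma_3\Gamma_1-\Gamma_2)\big]. \] Variables: with $Q:=e^{\frac{2}{\sqrt3}q^0}/(2j)$ (so $q^0=\tfrac1{\sqrt3}\ln(\text{volume})$ is the internal time, decreasing volume means $q^0$ decreasing), \[ \mu_1=Q\,e^{\frac{4}{\sqrt6}q^+},\quad \mu_2=Q\,e^{-\frac{2}{\sqrt6}q^++\sqrt2\,q^-},\quad \mu_3=Q\,e^{-\frac{2}{\sqrt6}q^+-\sqrt2\,q^-}, \] and $W_{j,l}(q^0,q^+,q^-)$ denotes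 $W_{j,l}$ evaluated at these $\mu_I$. The internal-time Hamiltonian is $\mathcal H=\sqrt h$, with $(q^\pm,\pi_\pm)$ canonically conjugate. *)

theory Defs
  imports "HOL-Analysis.Analysis"
begin

definition Fl :: "real \<Rightarrow> real \<Rightarrow> real" where
  "Fl l q =
     ((2 * l * (l + 1) * (l + 2)) / 3) powr (1 / (l - 1)) *
     ((l + 1) * ((q + 1) powr (l + 2) - \<bar>q - 1\<bar> powr (l + 2))
      - (l + 2) * q * ((q + 1) powr (l + 1) - sgn (q - 1) * \<bar>q - 1\<bar> powr (l + 1)))
     powr (1 / (1 - l))"

definition Gam :: "real \<Rightarrow> real \<Rightarrow> real \<Rightarrow> real \<Rightarrow> real" where
  "Gam l mI mJ mK = (mK * Fl l mJ + mJ * Fl l mK - mJ * mK * (Fl l mI)^2) / 2"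

definition Wmu :: "real \<Rightarrow> real \<Rightarrow> real \<Rightarrow> real \<Rightarrow> real \<Rightarrow> real" where
  "Wmu j l m1 m2 m3 =
     (let G1 = Gam l m1 m2 m3; G2 = Gam l m2 m3 m1; G3 = Gam l m3 m1 m2 in
      8 * j^2 * (m1 * m2 * (G1 * G2 - G3) + m2 * m3 * (G2 * G3 - G1) + m3 * m1 * (G3 * G1 - G2)))"

definition Wq :: "real \<Rightarrow> real \<Rightarrow> real \<Rightarrow> real \<Rightarrow> real \<Rightarrow> real" where
  "Wq j l q0 qp qm =
     (let Q = exp (2 / sqrt 3 * q0) / (2 * j) in
      Wmu j l (Q * exp (4 / sqrt 6 * qp))
              (Q * exp (- (2 / sqrt 6) * qp + sqrt 2 * qm))
              (Q * exp (- (2 / sqrt 6) * qp - sqrt 2 * qm)))"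

definition hq :: "real \<Rightarrow> real \<Rightarrow> real \<Rightarrow> real \<Rightarrow> real \<Rightarrow> real \<Rightarrow> real \<Rightarrow> real" where
  "hq j l q0 qp qm pp pm = (pp^2 + pm^2) / 2 + 2 * Wq j l q0 qp qm"

end

theory Submission
  imports Defs
begin

(*
  As q0 tends to -infinity with q+ and q- bounded, all three mu_I tend to 0 at the common rate
  exp (2 q0 / sqrt 3), and near 0 the function F_l behaves like the power mu^(1/(1-l)). Hence W
  and its q+- gradient decay like exp (2 q0 / sqrt 3), while the explicit q0-derivative of W is
  nonpositive: its only term of leading order comes from the summands -mu_I mu_J Gamma_K of W.
  Along the flow dh/dq0 is twice that explicit derivative, so h does not decrease as q0 decreases
  and stays above a positive constant. The forces dpi/dq0 are then integrable towards -infinity, so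
  the momenta converge to a limit pi_inf, which is nonzero because W tends to 0, and h stays
  bounded. Therefore the derivative of pi_inf . (q+, q-) is eventually bounded below by a positive
  constant, which is incompatible with bounded q+ and q-.
*)

lemma abs_mult_le_mult: "\<bar>a\<bar> \<le> A \<Longrightarrow> \<bar>b\<bar> \<le> B \<Longrightarrow> \<bar>a * b\<bar> \<le> A * (B::real)"
  by (simp add: abs_mult mult_mono')

lemma abs_mult_le_mult_left: "\<bar>a\<bar> \<le> A \<Longrightarrow> 0 \<le> c \<Longrightarrow> \<bar>c * a\<bar> \<le> c * (A::real)"
  by (simp add: abs_mult mult_left_mono)

lemma abs_sum3_le: "\<bar>a\<bar> \<le> X \<Longrightarrow> \<bar>b\<bar> \<le> X \<Longrightarrow> \<bar>c\<bar> \<le> X \<Longrightarrow> \<bar>a + b + c\<bar> \<le> 3 * (X::real)"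
  by linarith

lemma has_real_derivative_at_within_atMost:
  assumes "(f has_real_derivative D) (at s within {..q})" "s < q"
  shows "(f has_real_derivative D) (at s)"
proof -
  have "s \<in> interior {..q}" using interior_maximal[of "{..<q}" "{..q}"] assms(2) by auto
  then show ?thesis using assms(1) at_within_interior by metis
qed

lemma abs_diff_le_of_deriv_dominated:
  assumes "a \<le> b"
    and f: "\<And>\<sigma>. a \<le> \<sigma> \<Longrightarrow> \<sigma> \<le> b \<Longrightarrow> (f has_real_derivative f' \<sigma>) (at \<sigma>)"
    and g: "\<And>\<sigma>. a \<le> \<sigma> \<Longrightarrow> \<sigma> \<le> b \<Longrightarrow> (g has_real_derivative g' \<sigma>) (at \<sigma>)"
    and dominated: "\<And>\<sigma>. a \<le> \<sigma> \<Longrightarrow> \<sigma> \<le> b \<Longrightarrow> \<bar>f' \<sigma>\<bar> \<le> g' \<sigma>"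
  shows "\<bar>f b - f a\<bar> \<le> g b - g a"
proof -
  have "(\<lambda>\<sigma>. g \<sigma> + f \<sigma>) a \<le> (\<lambda>\<sigma>. g \<sigma> + f \<sigma>) b"
  proof (rule deriv_nonneg_imp_mono[OF _ _ \<open>a \<le> b\<close>])
    fix \<sigma> assume "\<sigma> \<in> {a..b}"
    then show "((\<lambda>\<sigma>. g \<sigma> + f \<sigma>) has_real_derivative g' \<sigma> + f' \<sigma>) (at \<sigma>)" "0 \<le> g' \<sigma> + f' \<sigma>"
      using DERIV_add[OF g f] dominated[of \<sigma>] by (auto simp: abs_le_iff)
  qed
  moreover have "(\<lambda>\<sigma>. g \<sigma> - f \<sigma>) a \<le> (\<lambda>\<sigma>. g \<sigma> - f \<sigma>) b"
  proof (rule deriv_nonneg_imp_mono[OF _ _ \<open>a \<le> b\<close>])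
    fix \<sigma> assume "\<sigma> \<in> {a..b}"
    then show "((\<lambda>\<sigma>. g \<sigma> - f \<sigma>) has_real_derivative g' \<sigma> - f' \<sigma>) (at \<sigma>)" "0 \<le> g' \<sigma> - f' \<sigma>"
      using DERIV_diff[OF g f] dominated[of \<sigma>] by (auto simp: abs_le_iff)
  qed
  ultimately show ?thesis by (simp add: abs_le_iff)
qed

lemma not_bounded_if_deriv_ge_pos:
  assumes f: "\<And>\<sigma>. \<sigma> \<le> S \<Longrightarrow> (f has_real_derivative f' \<sigma>) (at \<sigma>)"
    and ge: "\<And>\<sigma>. \<sigma> \<le> S \<Longrightarrow> v \<le> f' \<sigma>" and "v > 0"
  shows "\<not> (\<forall>\<sigma> \<le> S. \<bar>f \<sigma>\<bar> \<le> C)"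
proof
  assume bounded: "\<forall>\<sigma> \<le> S. \<bar>f \<sigma>\<bar> \<le> C"
  define s where "s = S - (2 * C + 1) / v"
  have "0 \<le> C" using bounded by force
  then have "s \<le> S" using \<open>v > 0\<close> by (simp add: s_def)
  have "f s - v * s \<le> f S - v * S"
    using DERIV_diff[OF f DERIV_cmult[OF DERIV_ident, of v]] ge \<open>s \<le> S\<close>
    by (intro deriv_nonneg_imp_mono[of s S "\<lambda>\<sigma>. f \<sigma> - v * \<sigma>"]) auto
  moreover have "v * S - v * s = 2 * C + 1" using \<open>v > 0\<close> by (simp add: s_def field_simps)
  moreover have "\<bar>f s\<bar> \<le> C" "\<bar>f S\<bar> \<le> C" using bounded \<open>s \<le> S\<close> by auto
  ultimately show False by (simp add: abs_le_iff)
qed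

text \<open>Along the Hamiltonian flow the \<open>q\<^sup>\<plusminus>\<close>-part of the change of the potential is compensated
  by the kinetic term, so only the explicit time dependence of \<open>W\<close> changes \<open>h\<close>.\<close>

lemma energy_has_real_derivative:
  assumes "(pp has_real_derivative - Dp / r) (at s)" "(pm has_real_derivative - Dm / r) (at s)"
    and "(w has_real_derivative ws + pp s / (2 * r) * Dp + pm s / (2 * r) * Dm) (at s)"
  shows "((\<lambda>s. (pp s^2 + pm s^2) / 2 + 2 * w s) has_real_derivative 2 * ws) (at s)"
  using assms by (auto intro!: derivative_eq_intros simp: field_simps)

lemma inner_ge_half_norm_sq_if_close:
  fixes a b x y \<eta> :: real
  assumes "\<bar>x - a\<bar> \<le> \<eta>" "\<bar>y - b\<bar> \<le> \<eta>" "16 * \<eta>^2 \<le> a^2 + b^2"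
  shows "a * x + b * y \<ge> (a^2 + b^2) / 2"
proof -
  define N where "N = a^2 + b^2"
  have N: "0 \<le> N" by (simp add: N_def)
  have "0 \<le> \<eta>" using assms(1) by linarith
  have "(\<bar>a\<bar> + \<bar>b\<bar>)^2 \<le> 2 * N"
    using zero_le_power2[of "\<bar>a\<bar> - \<bar>b\<bar>"] unfolding N_def by (simp add: power2_eq_square algebra_simps)
  then have "((\<bar>a\<bar> + \<bar>b\<bar>) * \<eta>)^2 \<le> (2 * N) * (N / 16)"
    unfolding power_mult_distrib using assms(3) N by (intro mult_mono) (auto simp: N_def)
  also have "\<dots> \<le> (N / 2)^2" using N by (simp add: power2_eq_square)
  finally have "(\<bar>a\<bar> + \<bar>b\<bar>) * \<eta> \<le> N / 2" by (rule power2_le_imp_le) (use N in simp)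
  moreover have "\<bar>a * (x - a)\<bar> \<le> \<bar>a\<bar> * \<eta>" "\<bar>b * (y - b)\<bar> \<le> \<bar>b\<bar> * \<eta>"
    unfolding abs_mult using assms(1,2) by (simp_all add: mult_left_mono)
  moreover have "a * x + b * y = N + a * (x - a) + b * (y - b)"
    unfolding N_def by (simp add: power2_eq_square algebra_simps)
  moreover have "(\<bar>a\<bar> + \<bar>b\<bar>) * \<eta> = \<bar>a\<bar> * \<eta> + \<bar>b\<bar> * \<eta>" by (rule distrib_right)
  ultimately show ?thesis unfolding N_def[symmetric] abs_le_iff by linarith
qed

section \<open>The function \<open>F\<^sub>l\<close> near \<open>0\<close>\<close>

definition Fl_bracket :: "real \<Rightarrow> real \<Rightarrow> real" where
  "Fl_bracket l q = (l + 1) * ((q + 1) powr (l + 2) - (1 - q) powr (l + 2))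
      - (l + 2) * q * ((q + 1) powr (l + 1) + (1 - q) powr (l + 1))"

definition Fl_bracket' :: "real \<Rightarrow> real \<Rightarrow> real" where
  "Fl_bracket' l q = (l + 1) * ((l + 2) * (q + 1) powr (l + 1) + (l + 2) * (1 - q) powr (l + 1))
      - (l + 2) * ((q + 1) powr (l + 1) + (1 - q) powr (l + 1))
      - (l + 2) * q * ((l + 1) * (q + 1) powr l - (l + 1) * (1 - q) powr l)"

lemma Fl_bracket_has_real_derivative:
  assumes "-1 < q" "q < 1"
  shows "(Fl_bracket l has_real_derivative Fl_bracket' l q) (at q)"
  using assms unfolding Fl_bracket_def Fl_bracket'_def
  by (auto intro!: derivative_eq_intros simp: add.commute)

lemma Fl_eq_Fl_bracket:
  assumes "0 < q" "q < 1"
  shows "Fl l q = ((2 * l * (l + 1) * (l + 2)) / 3) powr (1 / (l - 1)) * Fl_bracket l q powr (1 / (1 - l))"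
proof -
  have "\<bar>q - 1\<bar> = 1 - q" "sgn (q - 1) = -1" using assms by auto
  then show ?thesis unfolding Fl_def Fl_bracket_def by (simp add: add.commute)
qed

lemma Fl_has_real_derivative:
  assumes "0 < x" "x < 1" "Fl_bracket l x > 0"
  shows "(Fl l has_real_derivative ((2 * l * (l + 1) * (l + 2)) / 3) powr (1 / (l - 1)) *
    (1 / (1 - l) * Fl_bracket l x powr (1 / (1 - l) - 1) * Fl_bracket' l x)) (at x)"
proof -
  have "((\<lambda>y. ((2 * l * (l + 1) * (l + 2)) / 3) powr (1 / (l - 1)) * Fl_bracket l y powr (1 / (1 - l)))
      has_real_derivative ((2 * l * (l + 1) * (l + 2)) / 3) powr (1 / (l - 1)) *
        (1 / (1 - l) * Fl_bracket l x powr (1 / (1 - l) - 1) * Fl_bracket' l x)) (at x)"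
    using assms by (intro DERIV_cmult) (auto intro!: derivative_eq_intros Fl_bracket_has_real_derivative)
  then show ?thesis
    by (rule has_field_derivative_transform_within_open[of _ _ _ "{0<..<1}"])
      (use assms in \<open>auto simp: Fl_eq_Fl_bracket\<close>)
qed

text \<open>The constants come from the tangent \<open>2 l (l + 2) q\<close> of the bracket at the origin.\<close>

lemma Fl_bracket_linear_near_zero:
  assumes "0 < l"
  obtains \<delta> where "0 < \<delta>" "\<delta> < 1"
    "\<And>x. 0 \<le> x \<Longrightarrow> x < \<delta> \<Longrightarrow> l * (l + 2) \<le> Fl_bracket' l x \<and> Fl_bracket' l x \<le> 3 * (l * (l + 2))"
    "\<And>x. 0 < x \<Longrightarrow> x < \<delta> \<Longrightarrow> l * (l + 2) * x \<le> Fl_bracket l x \<and> Fl_bracket l x \<le> 3 * (l * (l + 2)) * x"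
proof -
  define k where "k = l * (l + 2)"
  have k: "k > 0" using assms by (simp add: k_def)
  have "isCont (Fl_bracket' l) 0"
    unfolding Fl_bracket'_def by (auto intro!: continuous_intros)
  then have "Fl_bracket' l \<midarrow>0\<rightarrow> Fl_bracket' l 0"
    by (simp add: isCont_def)
  moreover have "Fl_bracket' l 0 = 2 * k"
    by (simp add: Fl_bracket'_def k_def algebra_simps)
  ultimately obtain d where d: "d > 0"
    and hd: "\<And>x. x \<noteq> 0 \<Longrightarrow> \<bar>x\<bar> < d \<Longrightarrow> \<bar>Fl_bracket' l x - 2 * k\<bar> < k"
    using LIM_D[of "Fl_bracket' l" "2 * k" 0 k] k by auto
  define \<delta> where "\<delta> = min d (1/2)"
  have deriv_bounds: "k \<le> Fl_bracket' l x \<and> Fl_bracket' l x \<le> 3 * k" if "0 \<le> x" "x < \<delta>" for x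
    using hd[of x] that k by (cases "x = 0") (auto simp: \<delta>_def Fl_bracket'_def k_def algebra_simps)
  have "k * x \<le> Fl_bracket l x \<and> Fl_bracket l x \<le> 3 * k * x" if "0 < x" "x < \<delta>" for x
  proof -
    have "\<exists>z. 0 < z \<and> z < x \<and> Fl_bracket l x - Fl_bracket l 0 = (x - 0) * Fl_bracket' l z"
      by (rule MVT2) (use that in \<open>auto intro!: Fl_bracket_has_real_derivative simp: \<delta>_def\<close>)
    then obtain z where z: "0 < z" "z < x" "Fl_bracket l x - Fl_bracket l 0 = (x - 0) * Fl_bracket' l z"
      by blast
    moreover have "Fl_bracket l 0 = 0" by (simp add: Fl_bracket_def)
    ultimately show ?thesis
      using deriv_bounds[of z] that by (auto simp: mult.commute)
  qed
  moreover have "0 < \<delta>" "\<delta> < 1" using d by (auto simp: \<delta>_def)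
  ultimately show ?thesis using that deriv_bounds unfolding k_def by blast
qed

lemma Fl_bounds_from_bracket:
  fixes l k x :: real
  defines "A \<equiv> ((2 * l * (l + 1) * (l + 2)) / 3) powr (1 / (l - 1))" and "p \<equiv> 1 / (1 - l)"
  assumes l: "0 < l" "l < 1" and x: "0 < x" "x < 1" and k: "0 < k"
    and bracket: "k * x \<le> Fl_bracket l x" "Fl_bracket l x \<le> 3 * k * x"
    and bracket': "k \<le> Fl_bracket' l x" "Fl_bracket' l x \<le> 3 * k"
  shows "(Fl l has_real_derivative deriv (Fl l) x) (at x)"
    "0 \<le> x * deriv (Fl l) x" "x * deriv (Fl l) x \<le> 3 * p * Fl l x"
    "A * k powr p * x powr p \<le> Fl l x" "Fl l x \<le> A * (3 * k) powr p * x powr p"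
proof -
  have p: "p > 0" and A: "A > 0" using l by (simp_all add: p_def A_def)
  have pos: "Fl_bracket l x > 0" using bracket k x by (smt (verit) mult_pos_pos)
  have Fx: "Fl l x = A * Fl_bracket l x powr p" using Fl_eq_Fl_bracket[OF x] by (simp add: A_def p_def)
  define D where "D = A * (p * Fl_bracket l x powr (p - 1) * Fl_bracket' l x)"
  have dF: "(Fl l has_real_derivative D) (at x)"
    using Fl_has_real_derivative[OF x pos] by (simp add: D_def A_def p_def)
  then show "(Fl l has_real_derivative deriv (Fl l) x) (at x)" by (simp add: DERIV_imp_deriv)
  have pp: "Fl_bracket l x powr (p - 1) > 0" using pos by simp
  have "x * Fl_bracket' l x \<le> x * (3 * k)" using x bracket' by (intro mult_left_mono) auto
  then have "x * Fl_bracket' l x \<le> 3 * Fl_bracket l x" using bracket by (simp add: algebra_simps)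
  then have "(A * p * Fl_bracket l x powr (p - 1)) * (x * Fl_bracket' l x)
      \<le> (A * p * Fl_bracket l x powr (p - 1)) * (3 * Fl_bracket l x)"
    using A p pp by (intro mult_left_mono) auto
  moreover have "Fl_bracket l x powr p = Fl_bracket l x powr (p - 1) * Fl_bracket l x"
    using pos by (simp add: powr_diff)
  ultimately show "x * deriv (Fl l) x \<le> 3 * p * Fl l x"
    unfolding Fx DERIV_imp_deriv[OF dF] D_def by (simp add: algebra_simps)
  show "0 \<le> x * deriv (Fl l) x"
    unfolding DERIV_imp_deriv[OF dF] D_def using x A p pp bracket' k by simp
  have "(k * x) powr p \<le> Fl_bracket l x powr p" "Fl_bracket l x powr p \<le> (3 * k * x) powr p"
    using bracket k x p pos by (intro powr_mono2; simp)+
  then show "A * k powr p * x powr p \<le> Fl l x" "Fl l x \<le> A * (3 * k) powr p * x powr p"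
    using A k x unfolding Fx by (simp_all add: powr_mult)
qed

lemma Fl_power_like_near_zero:
  assumes l: "0 < l" "l < 1"
  obtains \<delta> c1 c2 where "0 < \<delta>" "\<delta> < 1" "0 < c1" "0 < c2"
    "\<And>x. 0 < x \<Longrightarrow> x < \<delta> \<Longrightarrow> (Fl l has_real_derivative deriv (Fl l) x) (at x)"
    "\<And>x. 0 < x \<Longrightarrow> x < \<delta> \<Longrightarrow> 0 \<le> x * deriv (Fl l) x \<and> x * deriv (Fl l) x \<le> 3 / (1 - l) * Fl l x"
    "\<And>x. 0 < x \<Longrightarrow> x < \<delta> \<Longrightarrow>
       c1 * x powr (1 / (1 - l)) \<le> Fl l x \<and> Fl l x \<le> c2 * x powr (1 / (1 - l))"
proof -
  define A where "A = ((2 * l * (l + 1) * (l + 2)) / 3) powr (1 / (l - 1))"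
  define k where "k = l * (l + 2)"
  define c1 c2 where "c1 = A * k powr (1 / (1 - l))" and "c2 = A * (3 * k) powr (1 / (1 - l))"
  have "k > 0" using l by (simp add: k_def)
  moreover have "0 < c1" "0 < c2" using l by (simp_all add: c1_def c2_def A_def k_def)
  moreover obtain \<delta> where \<delta>: "0 < \<delta>" "\<delta> < 1"
    and "\<And>x. 0 \<le> x \<Longrightarrow> x < \<delta> \<Longrightarrow> k \<le> Fl_bracket' l x \<and> Fl_bracket' l x \<le> 3 * k"
    and "\<And>x. 0 < x \<Longrightarrow> x < \<delta> \<Longrightarrow> k * x \<le> Fl_bracket l x \<and> Fl_bracket l x \<le> 3 * k * x"
    using Fl_bracket_linear_near_zero[OF l(1)] unfolding k_def by blast
  ultimately have "(Fl l has_real_derivative deriv (Fl l) x) (at x) \<and>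
      0 \<le> x * deriv (Fl l) x \<and> x * deriv (Fl l) x \<le> 3 / (1 - l) * Fl l x \<and>
      c1 * x powr (1 / (1 - l)) \<le> Fl l x \<and> Fl l x \<le> c2 * x powr (1 / (1 - l))"
    if "0 < x" "x < \<delta>" for x
    using Fl_bounds_from_bracket[OF l that(1) _ \<open>k > 0\<close>] that \<delta>
    unfolding c1_def c2_def A_def by auto
  then show ?thesis using that \<delta> \<open>0 < c1\<close> \<open>0 < c2\<close> by blast
qed

section \<open>The potential as a polynomial in \<open>\<mu>\<^sub>I\<close> and \<open>F\<^sub>l(\<mu>\<^sub>I)\<close>\<close>

text \<open>\<open>W_poly\<close> is \<open>W\<^sub>j\<^sub>,\<^sub>l\<close> with \<open>F\<^sub>l(\<mu>\<^sub>I)\<close> replaced by an independent variable \<open>f\<^sub>I\<close>.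
  Along a curve with \<open>\<mu>\<^sub>I' = a\<^sub>I \<mu>\<^sub>I\<close> we have \<open>F\<^sub>l(\<mu>\<^sub>I)' = a\<^sub>I g\<^sub>I\<close> with \<open>g\<^sub>I = \<mu>\<^sub>I F\<^sub>l'(\<mu>\<^sub>I)\<close>,
  and \<open>W_poly_deriv\<close> is the resulting derivative of \<open>W\<close>.\<close>

definition gam :: "real \<Rightarrow> real \<Rightarrow> real \<Rightarrow> real \<Rightarrow> real \<Rightarrow> real \<Rightarrow> real" where
  "gam xI xJ xK fI fJ fK = (xK * fJ + xJ * fK - xJ * xK * fI^2) / 2"

definition gam_deriv :: "real \<Rightarrow> real \<Rightarrow> real \<Rightarrow> real \<Rightarrow> real \<Rightarrow> real \<Rightarrow> real \<Rightarrow> real \<Rightarrow> real \<Rightarrow>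
    real \<Rightarrow> real \<Rightarrow> real \<Rightarrow> real" where
  "gam_deriv aI aJ aK xI xJ xK fI fJ fK gI gJ gK =
    (aK * xK * fJ + aJ * xK * gJ + aJ * xJ * fK + aK * xJ * gK
      - (aJ + aK) * xJ * xK * fI^2 - 2 * aI * xJ * xK * fI * gI) / 2"

definition W_poly :: "real \<Rightarrow> real \<Rightarrow> real \<Rightarrow> real \<Rightarrow> real \<Rightarrow> real \<Rightarrow> real \<Rightarrow> real" where
  "W_poly j x1 x2 x3 f1 f2 f3 =
    (let G1 = gam x1 x2 x3 f1 f2 f3; G2 = gam x2 x3 x1 f2 f3 f1; G3 = gam x3 x1 x2 f3 f1 f2 in
     8 * j^2 * (x1 * x2 * (G1 * G2 - G3) + x2 * x3 * (G2 * G3 - G1) + x3 * x1 * (G3 * G1 - G2)))"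

definition W_poly_deriv :: "real \<Rightarrow> real \<Rightarrow> real \<Rightarrow> real \<Rightarrow> real \<Rightarrow> real \<Rightarrow> real \<Rightarrow> real \<Rightarrow> real \<Rightarrow>
    real \<Rightarrow> real \<Rightarrow> real \<Rightarrow> real \<Rightarrow> real" where
  "W_poly_deriv j a1 a2 a3 x1 x2 x3 f1 f2 f3 g1 g2 g3 =
    (let G1 = gam x1 x2 x3 f1 f2 f3; G2 = gam x2 x3 x1 f2 f3 f1; G3 = gam x3 x1 x2 f3 f1 f2;
         D1 = gam_deriv a1 a2 a3 x1 x2 x3 f1 f2 f3 g1 g2 g3;
         D2 = gam_deriv a2 a3 a1 x2 x3 x1 f2 f3 f1 g2 g3 g1;
         D3 = gam_deriv a3 a1 a2 x3 x1 x2 f3 f1 f2 g3 g1 g2 in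
     8 * j^2 * ((a1 + a2) * x1 * x2 * (G1 * G2 - G3) + x1 * x2 * (D1 * G2 + G1 * D2 - D3)
       + (a2 + a3) * x2 * x3 * (G2 * G3 - G1) + x2 * x3 * (D2 * G3 + G2 * D3 - D1)
       + (a3 + a1) * x3 * x1 * (G3 * G1 - G2) + x3 * x1 * (D3 * G1 + G3 * D1 - D2)))"

lemma Wmu_eq_W_poly: "Wmu j l m1 m2 m3 = W_poly j m1 m2 m3 (Fl l m1) (Fl l m2) (Fl l m3)"
  unfolding Wmu_def W_poly_def Gam_def gam_def Let_def by simp

lemma Wmu_has_real_derivative:
  assumes "(X1 has_real_derivative a1 * X1 s) (at s)"
    and "(X2 has_real_derivative a2 * X2 s) (at s)"
    and "(X3 has_real_derivative a3 * X3 s) (at s)"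
    and F1: "(Fl l has_real_derivative D1) (at (X1 s))"
    and F2: "(Fl l has_real_derivative D2) (at (X2 s))"
    and F3: "(Fl l has_real_derivative D3) (at (X3 s))"
  shows "((\<lambda>s. Wmu j l (X1 s) (X2 s) (X3 s)) has_real_derivative
     W_poly_deriv j a1 a2 a3 (X1 s) (X2 s) (X3 s) (Fl l (X1 s)) (Fl l (X2 s)) (Fl l (X3 s))
        (X1 s * D1) (X2 s * D2) (X3 s * D3)) (at s)"
proof -
  note chains = DERIV_chain2[OF F1 assms(1)] DERIV_chain2[OF F2 assms(2)] DERIV_chain2[OF F3 assms(3)]
  show ?thesis
    unfolding Wmu_eq_W_poly W_poly_def gam_def Let_def
    apply (rule derivative_eq_intros chains assms(1-3) refl
        | simp only: zero_neq_numeral not_False_eq_True)+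
    unfolding W_poly_deriv_def gam_deriv_def gam_def Let_def
    by (simp add: field_simps power2_eq_square)
qed

lemma W_poly_deriv_linear:
  "W_poly_deriv j (c + u * a1 + w * b1) (c + u * a2 + w * b2) (c + u * a3 + w * b3) x1 x2 x3 f1 f2 f3 g1 g2 g3 =
   c * W_poly_deriv j 1 1 1 x1 x2 x3 f1 f2 f3 g1 g2 g3 + u * W_poly_deriv j a1 a2 a3 x1 x2 x3 f1 f2 f3 g1 g2 g3
   + w * W_poly_deriv j b1 b2 b3 x1 x2 x3 f1 f2 f3 g1 g2 g3"
proof -
  have gam_deriv_linear:
    "gam_deriv (c + u * aI + w * bI) (c + u * aJ + w * bJ) (c + u * aK + w * bK) xI xJ xK fI fJ fK gI gJ gK =
     c * gam_deriv 1 1 1 xI xJ xK fI fJ fK gI gJ gK + u * gam_deriv aI aJ aK xI xJ xK fI fJ fK gI gJ gK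
     + w * gam_deriv bI bJ bK xI xJ xK fI fJ fK gI gJ gK" for aI aJ aK bI bJ bK xI xJ xK fI fJ fK gI gJ gK
    unfolding gam_deriv_def by (simp add: field_simps)
  show ?thesis
    unfolding W_poly_deriv_def Let_def gam_deriv_linear by (simp add: algebra_simps)
qed

lemma abs_gam_le:
  assumes "0 \<le> xJ" "xJ \<le> t" "0 \<le> xK" "xK \<le> t" "0 \<le> fI" "fI \<le> \<phi>" "0 \<le> fJ" "fJ \<le> \<phi>"
    "0 \<le> fK" "fK \<le> \<phi>" "t \<le> 1" "\<phi> \<le> 1"
  shows "\<bar>gam xI xJ xK fI fJ fK\<bar> \<le> 3/2 * (t * \<phi>)"
proof -
  have "xJ * xK * fI^2 \<le> (t * t) * (\<phi> * \<phi>)"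
    using assms by (intro mult_mono') (auto intro: mult_mono' simp: power2_eq_square)
  also have "\<dots> = (t * \<phi>) * (t * \<phi>)" by simp
  also have "\<dots> \<le> (t * \<phi>) * 1"
    using assms by (intro mult_left_mono mult_le_one) auto
  finally have "xJ * xK * fI^2 \<le> t * \<phi>" by simp
  moreover have "xK * fJ \<le> t * \<phi>" "xJ * fK \<le> t * \<phi>" using assms by (auto intro: mult_mono')
  moreover have "0 \<le> xK * fJ" "0 \<le> xJ * fK" "0 \<le> xJ * xK * fI^2" using assms by auto
  ultimately show ?thesis unfolding gam_def by (auto simp: abs_le_iff)
qed

lemma abs_gam_deriv_le:
  assumes "0 \<le> xI" "xI \<le> t" "0 \<le> xJ" "xJ \<le> t" "0 \<le> xK" "xK \<le> t"
    "0 \<le> fI" "fI \<le> \<phi>" "0 \<le> fJ" "fJ \<le> \<phi>" "0 \<le> fK" "fK \<le> \<phi>"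
    "0 \<le> gI" "gI \<le> P * fI" "0 \<le> gJ" "gJ \<le> P * fJ" "0 \<le> gK" "gK \<le> P * fK"
    "\<bar>aI\<bar> \<le> L" "\<bar>aJ\<bar> \<le> L" "\<bar>aK\<bar> \<le> L" "t \<le> 1" "\<phi> \<le> 1" "0 \<le> P"
  shows "\<bar>gam_deriv aI aJ aK xI xJ xK fI fJ fK gI gJ gK\<bar> \<le> (2 + 2 * P) * L * (t * \<phi>)"
proof -
  have L: "0 \<le> L" using assms by linarith
  have tp: "0 \<le> t * \<phi>" "t * \<phi> \<le> 1" using assms by (auto intro: mult_le_one)
  have gb: "\<bar>gI\<bar> \<le> P * \<phi>" "\<bar>gJ\<bar> \<le> P * \<phi>" "\<bar>gK\<bar> \<le> P * \<phi>"
    using assms by (auto intro!: order.trans[OF _ mult_left_mono[of _ \<phi> P]])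
  have xb: "\<bar>xI\<bar> \<le> t" "\<bar>xJ\<bar> \<le> t" "\<bar>xK\<bar> \<le> t" and fb: "\<bar>fI\<bar> \<le> \<phi>" "\<bar>fJ\<bar> \<le> \<phi>" "\<bar>fK\<bar> \<le> \<phi>"
    using assms by auto
  have l2: "\<bar>aJ + aK\<bar> \<le> 2 * L" and l3: "\<bar>2 * aI\<bar> \<le> 2 * L" using assms by auto
  have e1: "\<bar>aK * xK * fJ\<bar> \<le> L * t * \<phi>" "\<bar>aJ * xJ * fK\<bar> \<le> L * t * \<phi>"
    by (intro abs_mult_le_mult xb fb assms)+
  have e2: "\<bar>aJ * xK * gJ\<bar> \<le> L * t * (P * \<phi>)" "\<bar>aK * xJ * gK\<bar> \<le> L * t * (P * \<phi>)"
    by (intro abs_mult_le_mult xb gb assms)+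
  have "\<bar>(aJ + aK) * xJ * xK * fI^2\<bar> \<le> 2 * L * t * t * (\<phi> * \<phi>)"
    unfolding power2_eq_square mult.assoc[symmetric] by (intro abs_mult_le_mult xb fb l2)
  also have "\<dots> = 2 * L * (t * \<phi>) * (t * \<phi>)" by simp
  also have "\<dots> \<le> 2 * L * (t * \<phi>) * 1" using tp L by (intro mult_left_mono) auto
  finally have e3: "\<bar>(aJ + aK) * xJ * xK * fI^2\<bar> \<le> 2 * L * (t * \<phi>)" by simp
  have "\<bar>2 * aI * xJ * xK * fI * gI\<bar> \<le> 2 * L * t * t * \<phi> * (P * \<phi>)"
    by (intro abs_mult_le_mult xb fb gb l3)
  also have "\<dots> = 2 * L * P * (t * \<phi>) * (t * \<phi>)" by simp
  also have "\<dots> \<le> 2 * L * P * (t * \<phi>) * 1" using tp L assms by (intro mult_left_mono) auto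
  finally have e4: "\<bar>2 * aI * xJ * xK * fI * gI\<bar> \<le> 2 * L * P * (t * \<phi>)" by simp
  show ?thesis
    using e1 e2 e3 e4 unfolding gam_deriv_def by (simp add: abs_le_iff algebra_simps; linarith)
qed

lemma abs_W_poly_summand_le:
  fixes G1 G2 G3 x1 x2 :: real
  assumes "\<bar>G1\<bar> \<le> \<gamma>" "\<bar>G2\<bar> \<le> \<gamma>" "\<bar>G3\<bar> \<le> \<gamma>" "\<bar>x1\<bar> \<le> t" "\<bar>x2\<bar> \<le> t"
  shows "\<bar>x1 * x2 * (G1 * G2 - G3)\<bar> \<le> t * t * (\<gamma> * \<gamma> + \<gamma>)"
proof -
  have "\<bar>G1 * G2 - G3\<bar> \<le> \<gamma> * \<gamma> + \<gamma>"
    using abs_mult_le_mult[OF assms(1,2)] assms(3) by (simp add: abs_le_iff; linarith)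
  then show ?thesis by (intro abs_mult_le_mult assms)
qed

lemma abs_W_poly_deriv_summand_le:
  fixes G1 G2 G3 D1 D2 D3 a1 a2 x1 x2 :: real
  assumes "\<bar>G1\<bar> \<le> \<gamma>" "\<bar>G2\<bar> \<le> \<gamma>" "\<bar>G3\<bar> \<le> \<gamma>" "\<bar>D1\<bar> \<le> d" "\<bar>D2\<bar> \<le> d" "\<bar>D3\<bar> \<le> d"
    "\<bar>a1\<bar> \<le> L" "\<bar>a2\<bar> \<le> L" "\<bar>x1\<bar> \<le> t" "\<bar>x2\<bar> \<le> t"
  shows "\<bar>(a1 + a2) * x1 * x2 * (G1 * G2 - G3) + x1 * x2 * (D1 * G2 + G1 * D2 - D3)\<bar>
    \<le> 2 * L * t * t * (\<gamma> * \<gamma> + \<gamma>) + t * t * (2 * d * \<gamma> + d)"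
proof -
  have "\<bar>a1 + a2\<bar> \<le> 2 * L" using assms(7,8) by linarith
  then have a: "\<bar>(a1 + a2) * (x1 * x2 * (G1 * G2 - G3))\<bar> \<le> 2 * L * (t * t * (\<gamma> * \<gamma> + \<gamma>))"
    by (intro abs_mult_le_mult abs_W_poly_summand_le assms)
  have "\<bar>D1 * G2 + G1 * D2 - D3\<bar> \<le> 2 * d * \<gamma> + d"
    using abs_mult_le_mult[OF assms(4,2)] abs_mult_le_mult[OF assms(1,5)] assms(6)
    by (simp add: abs_le_iff mult.commute[of \<gamma> d]; linarith)
  then have b: "\<bar>x1 * x2 * (D1 * G2 + G1 * D2 - D3)\<bar> \<le> t * t * (2 * d * \<gamma> + d)"
    by (intro abs_mult_le_mult assms)
  show ?thesis using a b by (simp add: abs_le_iff algebra_simps; linarith)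
qed

lemma abs_W_poly_scaling_summand_le:
  fixes xI xJ GI GJ DI DJ :: real
  assumes "\<bar>xI\<bar> \<le> t" "\<bar>xJ\<bar> \<le> t" "\<bar>GI\<bar> \<le> 3/2 * (t * \<phi>)" "\<bar>GJ\<bar> \<le> 3/2 * (t * \<phi>)"
    "\<bar>DI\<bar> \<le> (2 + 2 * P) * (t * \<phi>)" "\<bar>DJ\<bar> \<le> (2 + 2 * P) * (t * \<phi>)"
  shows "\<bar>2 * xI * xJ * GI * GJ + xI * xJ * (DI * GJ + GI * DJ)\<bar> \<le> (9/2 + 3 * (2 + 2 * P)) * (t^4 * \<phi>^2)"
proof -
  let ?g = "3/2 * (t * \<phi>)" and ?d = "(2 + 2 * P) * (t * \<phi>)"
  have "\<bar>2 * xI * xJ * GI * GJ\<bar> \<le> 2 * t * t * ?g * ?g"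
    by (intro abs_mult_le_mult assms) simp
  moreover have "\<bar>DI * GJ + GI * DJ\<bar> \<le> ?d * ?g + ?g * ?d"
    using abs_mult_le_mult[OF assms(5,4)] abs_mult_le_mult[OF assms(3,6)] abs_triangle_ineq[of "DI * GJ" "GI * DJ"]
    by linarith
  then have "\<bar>xI * xJ * (DI * GJ + GI * DJ)\<bar> \<le> t * t * (?d * ?g + ?g * ?d)"
    by (intro abs_mult_le_mult assms)
  moreover have "2 * t * t * ?g * ?g + t * t * (?d * ?g + ?g * ?d) = (9/2 + 3 * (2 + 2 * P)) * (t^4 * \<phi>^2)"
    by (simp add: algebra_simps power2_eq_square power4_eq_xxxx)
  ultimately show ?thesis by (smt (verit) abs_triangle_ineq)
qed

text \<open>The contribution of the summand \<open>-\<mu>\<^sub>I \<mu>\<^sub>J \<Gamma>\<^sub>K\<close> of \<open>W\<close> to its derivative along the scaling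
  \<open>\<mu> \<mapsto> e\<^sup>s \<mu>\<close> (all \<open>a\<^sub>I = 1\<close>): the only contribution of order \<open>t\<^sup>3 \<phi>\<close>, and a negative one.\<close>

lemma gam_scaling_summand_le:
  assumes "0 \<le> xI" "xI \<le> t" "0 \<le> xJ" "xJ \<le> t" "0 \<le> fI" "0 \<le> fJ" "0 \<le> fK" "fK \<le> \<phi>"
    "0 \<le> gI" "0 \<le> gJ" "0 \<le> gK" "gK \<le> P * fK" "0 \<le> P"
  shows "- (xI * xJ * (2 * gam xK xI xJ fK fI fJ + gam_deriv 1 1 1 xK xI xJ fK fI fJ gK gI gJ))
     \<le> - (3/2) * (xI * xJ * (xJ * fI)) + (2 + P) * (t^4 * \<phi>^2)"
proof -
  have e: "2 * gam xK xI xJ fK fI fJ + gam_deriv 1 1 1 xK xI xJ fK fI fJ gK gI gJ =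
     3/2 * (xJ * fI) + (3/2 * (xI * fJ) + (xJ * gI + xI * gJ) / 2) - xI * xJ * (2 * fK^2 + fK * gK)"
    unfolding gam_def gam_deriv_def by (simp add: field_simps power2_eq_square)
  have "fK * gK \<le> fK * (P * fK)" using assms by (intro mult_left_mono) auto
  then have "2 * fK^2 + fK * gK \<le> (2 + P) * fK^2" by (simp add: algebra_simps power2_eq_square)
  also have "\<dots> \<le> (2 + P) * \<phi>^2" using assms by (intro mult_left_mono power_mono) auto
  finally have n2: "2 * fK^2 + fK * gK \<le> (2 + P) * \<phi>^2" .
  have xx: "0 \<le> xI * xJ" "xI * xJ \<le> t * t" using assms by (auto intro: mult_mono')
  have "xI * xJ * (2 * fK^2 + fK * gK) \<le> (t * t) * ((2 + P) * \<phi>^2)"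
    using xx n2 assms by (intro mult_mono') auto
  then have "(xI * xJ) * (xI * xJ * (2 * fK^2 + fK * gK)) \<le> (t * t) * ((t * t) * ((2 + P) * \<phi>^2))"
    using xx n2 assms by (intro mult_mono') auto
  then have n3: "(xI * xJ) * (xI * xJ * (2 * fK^2 + fK * gK)) \<le> (2 + P) * (t^4 * \<phi>^2)"
    by (simp add: power4_eq_xxxx power2_eq_square algebra_simps)
  have n4: "0 \<le> xI * xJ * (3/2 * (xI * fJ) + (xJ * gI + xI * gJ) / 2)" using xx assms by simp
  show ?thesis unfolding e using n3 n4 by (simp add: algebra_simps)
qed

locale small_args =
  fixes x1 x2 x3 f1 f2 f3 g1 g2 g3 t \<phi> P :: real
  assumes x: "0 \<le> x1" "x1 \<le> t" "0 \<le> x2" "x2 \<le> t" "0 \<le> x3" "x3 \<le> t"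
    and f: "0 \<le> f1" "f1 \<le> \<phi>" "0 \<le> f2" "f2 \<le> \<phi>" "0 \<le> f3" "f3 \<le> \<phi>"
    and g: "0 \<le> g1" "g1 \<le> P * f1" "0 \<le> g2" "g2 \<le> P * f2" "0 \<le> g3" "g3 \<le> P * f3"
    and t_le_1: "t \<le> 1" and phi_le_1: "\<phi> \<le> 1" and P: "0 \<le> P"
begin

lemma t_phi: "0 \<le> t * \<phi>" "t * \<phi> \<le> 1"
  using x f t_le_1 phi_le_1 by (auto intro: mult_le_one)

lemma abs_x_le: "\<bar>x1\<bar> \<le> t" "\<bar>x2\<bar> \<le> t" "\<bar>x3\<bar> \<le> t"
  using x by auto

lemma abs_gams_le:
  "\<bar>gam x1 x2 x3 f1 f2 f3\<bar> \<le> 3/2 * (t * \<phi>)"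
  "\<bar>gam x2 x3 x1 f2 f3 f1\<bar> \<le> 3/2 * (t * \<phi>)"
  "\<bar>gam x3 x1 x2 f3 f1 f2\<bar> \<le> 3/2 * (t * \<phi>)"
  by (rule abs_gam_le; use x f t_le_1 phi_le_1 in auto)+

lemma abs_gam_derivs_le:
  assumes "\<bar>a1\<bar> \<le> L" "\<bar>a2\<bar> \<le> L" "\<bar>a3\<bar> \<le> L"
  shows "\<bar>gam_deriv a1 a2 a3 x1 x2 x3 f1 f2 f3 g1 g2 g3\<bar> \<le> (2 + 2 * P) * L * (t * \<phi>)"
    "\<bar>gam_deriv a2 a3 a1 x2 x3 x1 f2 f3 f1 g2 g3 g1\<bar> \<le> (2 + 2 * P) * L * (t * \<phi>)"
    "\<bar>gam_deriv a3 a1 a2 x3 x1 x2 f3 f1 f2 g3 g1 g2\<bar> \<le> (2 + 2 * P) * L * (t * \<phi>)"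
  using x f g t_le_1 phi_le_1 P assms by (intro abs_gam_deriv_le; simp)+

lemma abs_W_poly_le: "\<bar>W_poly j x1 x2 x3 f1 f2 f3\<bar> \<le> 8 * j^2 * (12 * (t^3 * \<phi>))"
proof -
  let ?g = "3/2 * (t * \<phi>)"
  note G = abs_gams_le and X = abs_x_le
  note sum_le = abs_sum3_le[OF abs_W_poly_summand_le[OF G(1) G(2) G(3) X(1) X(2)]
    abs_W_poly_summand_le[OF G(2) G(3) G(1) X(2) X(3)] abs_W_poly_summand_le[OF G(3) G(1) G(2) X(3) X(1)]]
  have "3 * (t * t * (?g * ?g + ?g)) = 3 * (t * t * (t * \<phi>)) * (9/4 * (t * \<phi>) + 3/2)"
    by (simp add: algebra_simps)
  also have "\<dots> \<le> 3 * (t * t * (t * \<phi>)) * 4" using t_phi x by (intro mult_left_mono) auto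
  finally have "3 * (t * t * (?g * ?g + ?g)) \<le> 12 * (t^3 * \<phi>)" by (simp add: power3_eq_cube)
  from order.trans[OF sum_le this] show ?thesis
    unfolding W_poly_def Let_def by (rule abs_mult_le_mult_left) simp
qed

lemma abs_W_poly_deriv_le:
  assumes a: "\<bar>a1\<bar> \<le> L" "\<bar>a2\<bar> \<le> L" "\<bar>a3\<bar> \<le> L"
  shows "\<bar>W_poly_deriv j a1 a2 a3 x1 x2 x3 f1 f2 f3 g1 g2 g3\<bar>
    \<le> 8 * j^2 * (3 * (8 * L + 4 * ((2 + 2 * P) * L)) * (t^3 * \<phi>))"
proof -
  let ?g = "3/2 * (t * \<phi>)" and ?d = "(2 + 2 * P) * L * (t * \<phi>)"
  have L: "0 \<le> L" using a by linarith
  note G = abs_gams_le and D = abs_gam_derivs_le[OF a] and X = abs_x_le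
  note sum_le = abs_sum3_le[OF abs_W_poly_deriv_summand_le[OF G(1) G(2) G(3) D(1) D(2) D(3) a(1) a(2) X(1) X(2)]
      abs_W_poly_deriv_summand_le[OF G(2) G(3) G(1) D(2) D(3) D(1) a(2) a(3) X(2) X(3)]
      abs_W_poly_deriv_summand_le[OF G(3) G(1) G(2) D(3) D(1) D(2) a(3) a(1) X(3) X(1)]]
  have "3 * (2 * L * t * t * (?g * ?g + ?g) + t * t * (2 * ?d * ?g + ?d)) =
     3 * (t * t * (t * \<phi>)) * (2 * L * (9/4 * (t * \<phi>) + 3/2) + (2 + 2 * P) * L * (3 * (t * \<phi>) + 1))"
    by (simp add: algebra_simps)
  also have "\<dots> \<le> 3 * (t * t * (t * \<phi>)) * (2 * L * 4 + (2 + 2 * P) * L * 4)"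
    using t_phi x L P by (intro mult_left_mono add_mono) auto
  finally have "3 * (2 * L * t * t * (?g * ?g + ?g) + t * t * (2 * ?d * ?g + ?d))
      \<le> 3 * (8 * L + 4 * ((2 + 2 * P) * L)) * (t^3 * \<phi>)"
    by (simp add: power3_eq_cube algebra_simps)
  from order.trans[OF sum_le this] show ?thesis
    unfolding W_poly_deriv_def Let_def by (simp add: abs_mult add.assoc mult_left_mono)
qed

lemma W_poly_deriv_scaling_le:
  "W_poly_deriv j 1 1 1 x1 x2 x3 f1 f2 f3 g1 g2 g3
    \<le> 8 * j^2 * (- (3/2) * (x1 * x2 * (x2 * f1)) + (3 * (9/2 + 3 * (2 + 2 * P)) + 3 * (2 + P)) * (t^4 * \<phi>^2))"
proof -
  let ?G1 = "gam x1 x2 x3 f1 f2 f3" and ?G2 = "gam x2 x3 x1 f2 f3 f1" and ?G3 = "gam x3 x1 x2 f3 f1 f2"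
  let ?D1 = "gam_deriv 1 1 1 x1 x2 x3 f1 f2 f3 g1 g2 g3" and ?D2 = "gam_deriv 1 1 1 x2 x3 x1 f2 f3 f1 g2 g3 g1"
    and ?D3 = "gam_deriv 1 1 1 x3 x1 x2 f3 f1 f2 g3 g1 g2"
  note G = abs_gams_le and D = abs_gam_derivs_le[of 1 1 1 1, simplified] and X = abs_x_le
  let ?Q = "(2 * x1 * x2 * ?G1 * ?G2 + x1 * x2 * (?D1 * ?G2 + ?G1 * ?D2))
       + (2 * x2 * x3 * ?G2 * ?G3 + x2 * x3 * (?D2 * ?G3 + ?G2 * ?D3))
       + (2 * x3 * x1 * ?G3 * ?G1 + x3 * x1 * (?D3 * ?G1 + ?G3 * ?D1))"
  let ?R = "- (x1 * x2 * (2 * ?G3 + ?D3)) - x2 * x3 * (2 * ?G1 + ?D1) - x3 * x1 * (2 * ?G2 + ?D2)"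
  have eq: "W_poly_deriv j 1 1 1 x1 x2 x3 f1 f2 f3 g1 g2 g3 = 8 * j^2 * (?Q + ?R)"
    unfolding W_poly_deriv_def Let_def by (simp add: algebra_simps)
  have "?Q \<le> 3 * ((9/2 + 3 * (2 + 2 * P)) * (t^4 * \<phi>^2))"
    by (rule abs_le_D1, intro abs_sum3_le abs_W_poly_scaling_summand_le X G D)
  moreover have "- (x1 * x2 * (2 * ?G3 + ?D3)) \<le> - (3/2) * (x1 * x2 * (x2 * f1)) + (2 + P) * (t^4 * \<phi>^2)"
    "- (x2 * x3 * (2 * ?G1 + ?D1)) \<le> - (3/2) * (x2 * x3 * (x3 * f2)) + (2 + P) * (t^4 * \<phi>^2)"
    "- (x3 * x1 * (2 * ?G2 + ?D2)) \<le> - (3/2) * (x3 * x1 * (x1 * f3)) + (2 + P) * (t^4 * \<phi>^2)"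
    using x f g P by (intro gam_scaling_summand_le; simp)+
  moreover have "0 \<le> x2 * x3 * (x3 * f2)" "0 \<le> x3 * x1 * (x1 * f3)" using x f by auto
  moreover have "(3 * (9/2 + 3 * (2 + 2 * P)) + 3 * (2 + P)) * (t^4 * \<phi>^2)
      = 3 * ((9/2 + 3 * (2 + 2 * P)) * (t^4 * \<phi>^2)) + 3 * ((2 + P) * (t^4 * \<phi>^2))"
    by (simp add: algebra_simps)
  ultimately have "?Q + ?R \<le> - (3/2) * (x1 * x2 * (x2 * f1))
      + (3 * (9/2 + 3 * (2 + 2 * P)) + 3 * (2 + P)) * (t^4 * \<phi>^2)"
    by linarith
  then show ?thesis
    unfolding eq by (rule mult_left_mono) simp
qed

end

section \<open>Small volume at bounded anisotropy\<close>

definition Q :: "real \<Rightarrow> real \<Rightarrow> real" where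
  "Q j q0 = exp (2 / sqrt 3 * q0) / (2 * j)"

definition aniso1 :: "real \<Rightarrow> real \<Rightarrow> real" where "aniso1 x y = 4 / sqrt 6 * x"
definition aniso2 :: "real \<Rightarrow> real \<Rightarrow> real" where "aniso2 x y = - (2 / sqrt 6) * x + sqrt 2 * y"
definition aniso3 :: "real \<Rightarrow> real \<Rightarrow> real" where "aniso3 x y = - (2 / sqrt 6) * x - sqrt 2 * y"

lemma Wq_eq_Wmu:
  "Wq j l q0 x y = Wmu j l (Q j q0 * exp (aniso1 x y)) (Q j q0 * exp (aniso2 x y)) (Q j q0 * exp (aniso3 x y))"
  unfolding Wq_def Q_def aniso1_def aniso2_def aniso3_def Let_def by simp

lemma abs_aniso_coeffs_le:
  "\<bar>4 / sqrt 6\<bar> \<le> 2" "\<bar>- (2 / sqrt 6)\<bar> \<le> 2" "\<bar>0::real\<bar> \<le> 2" "\<bar>sqrt 2\<bar> \<le> 2" "\<bar>- sqrt 2\<bar> \<le> 2"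
proof -
  have "2 \<le> sqrt 6" by (rule real_le_rsqrt) simp
  then show "\<bar>4 / sqrt 6\<bar> \<le> 2" "\<bar>- (2 / sqrt 6)\<bar> \<le> 2" by (simp_all add: divide_le_eq)
  have "sqrt 2 \<le> 2" by (rule power2_le_imp_le) simp_all
  then show "\<bar>0::real\<bar> \<le> 2" "\<bar>sqrt 2\<bar> \<le> 2" "\<bar>- sqrt 2\<bar> \<le> 2" by simp_all
qed

lemma abs_aniso_le:
  assumes "\<bar>x\<bar> \<le> B" "\<bar>y\<bar> \<le> B"
  shows "\<bar>aniso1 x y\<bar> \<le> 3 * B" "\<bar>aniso2 x y\<bar> \<le> 3 * B" "\<bar>aniso3 x y\<bar> \<le> 3 * B"
proof -
  have "2 \<le> sqrt 6" by (rule real_le_rsqrt) simp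
  then have "\<bar>4 / sqrt 6\<bar> \<le> 2" "\<bar>2 / sqrt 6\<bar> \<le> 1" by (simp_all add: divide_le_eq)
  moreover have "\<bar>sqrt 2\<bar> \<le> 3/2" by (rule power2_le_imp_le) (simp_all add: power2_eq_square)
  ultimately have "\<bar>4 / sqrt 6 * x\<bar> \<le> 2 * B" "\<bar>2 / sqrt 6 * x\<bar> \<le> 1 * B" "\<bar>sqrt 2 * y\<bar> \<le> 3/2 * B"
    using assms by (intro abs_mult_le_mult; simp)+
  then show "\<bar>aniso1 x y\<bar> \<le> 3 * B" "\<bar>aniso2 x y\<bar> \<le> 3 * B" "\<bar>aniso3 x y\<bar> \<le> 3 * B"
    unfolding aniso1_def aniso2_def aniso3_def using assms by linarith+
qed

text \<open>\<open>B\<close> is the assumed bound on \<open>|q\<^sup>\<plusminus>|\<close>. Then \<open>mu_max q\<^sup>0\<close> bounds every \<open>\<mu>\<^sub>I\<close> from above,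
  and up to the factor \<open>mu_ratio\<close> also from below; \<open>admissible\<close> arguments are those where these
  \<open>\<mu>\<^sub>I\<close> are small enough for the asymptotics of \<open>F\<^sub>l\<close> near \<open>0\<close> to apply.\<close>

locale collapse_regime =
  fixes j l \<delta> c1 c2 B :: real
  assumes j: "j \<ge> 1/2" and l: "0 < l" "l < 1" and \<delta>: "0 < \<delta>" "\<delta> < 1" and c: "0 < c1" "0 < c2"
    and B: "0 \<le> B"
    and Fl_deriv: "\<And>x. 0 < x \<Longrightarrow> x < \<delta> \<Longrightarrow> (Fl l has_real_derivative deriv (Fl l) x) (at x)"
    and Fl_logderiv: "\<And>x. 0 < x \<Longrightarrow> x < \<delta> \<Longrightarrow>
      0 \<le> x * deriv (Fl l) x \<and> x * deriv (Fl l) x \<le> 3 / (1 - l) * Fl l x"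
    and Fl_powr: "\<And>x. 0 < x \<Longrightarrow> x < \<delta> \<Longrightarrow>
      c1 * x powr (1 / (1 - l)) \<le> Fl l x \<and> Fl l x \<le> c2 * x powr (1 / (1 - l))"
begin

definition "p = 1 / (1 - l)"
definition "P = 3 / (1 - l)"
definition "mu_ratio = exp (6 * B)"
definition "Fl_ratio = c1 / (c2 * mu_ratio powr p)"
definition "C_scaling = 3 * (9/2 + 3 * (2 + 2 * P)) + 3 * (2 + P)"
definition "mu_thr = min (\<delta> / 2) (min (1 / c2) ((3/2) * Fl_ratio / mu_ratio^3 / C_scaling))"
definition "C_dW = 8 * j^2 * (3 * (8 * 2 + 4 * ((2 + 2 * P) * 2)))"
definition "C_W = 8 * j^2 * 12"

definition "mu_max s = Q j s * exp (3 * B)"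
definition "mu1 s x y = Q j s * exp (aniso1 x y)"
definition "mu2 s x y = Q j s * exp (aniso2 x y)"
definition "mu3 s x y = Q j s * exp (aniso3 x y)"
definition "xdFl z = z * deriv (Fl l) z"

definition "dW a1 a2 a3 s x y = W_poly_deriv j a1 a2 a3 (mu1 s x y) (mu2 s x y) (mu3 s x y)
    (Fl l (mu1 s x y)) (Fl l (mu2 s x y)) (Fl l (mu3 s x y))
    (xdFl (mu1 s x y)) (xdFl (mu2 s x y)) (xdFl (mu3 s x y))"
definition "dW_plus = dW (4 / sqrt 6) (- (2 / sqrt 6)) (- (2 / sqrt 6))"
definition "dW_minus = dW 0 (sqrt 2) (- sqrt 2)"

definition "admissible s x y \<longleftrightarrow> \<bar>x\<bar> \<le> B \<and> \<bar>y\<bar> \<le> B \<and> mu_max s \<le> mu_thr"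

lemma p_ge_1: "p \<ge> 1" using l by (simp add: p_def field_simps)
lemma P_nonneg: "P \<ge> 0" using l by (simp add: P_def)
lemma mu_ratio_ge_1: "mu_ratio \<ge> 1" using B by (simp add: mu_ratio_def)
lemma Fl_ratio_pos: "Fl_ratio > 0" using c mu_ratio_ge_1 by (simp add: Fl_ratio_def)
lemma C_scaling_pos: "C_scaling > 0" using P_nonneg by (simp add: C_scaling_def)
lemma C_dW_nonneg: "C_dW \<ge> 0" using P_nonneg by (simp add: C_dW_def)
lemma C_W_nonneg: "C_W \<ge> 0" by (simp add: C_W_def)

lemma mu_thr:
  "mu_thr > 0" "mu_thr < \<delta>" "mu_thr \<le> 1 / c2" "mu_thr \<le> 1"
  "mu_thr \<le> (3/2) * Fl_ratio / mu_ratio^3 / C_scaling"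
  using \<delta> c Fl_ratio_pos C_scaling_pos mu_ratio_ge_1 by (auto simp: mu_thr_def)

lemma Q_pos: "Q j s > 0" using j by (simp add: Q_def)

lemma mu_max_pos: "mu_max s > 0" using Q_pos by (simp add: mu_max_def)

lemma Q_exp_bounds:
  assumes "\<bar>e\<bar> \<le> 3 * B" "mu_max s \<le> mu_thr"
  shows "0 < Q j s * exp e" "Q j s * exp e \<le> mu_max s" "mu_max s \<le> mu_ratio * (Q j s * exp e)"
    "Q j s * exp e < \<delta>"
proof -
  show "0 < Q j s * exp e" using Q_pos by simp
  have "exp e \<le> exp (3 * B)" using assms by simp
  then show le: "Q j s * exp e \<le> mu_max s" unfolding mu_max_def using Q_pos[of s] by simp
  have "exp (3 * B) \<le> exp (6 * B) * exp e" unfolding exp_add[symmetric] using assms by simp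
  then show "mu_max s \<le> mu_ratio * (Q j s * exp e)"
    unfolding mu_max_def mu_ratio_def using Q_pos[of s] by (simp add: algebra_simps)
  show "Q j s * exp e < \<delta>" using le assms mu_thr by linarith
qed

lemma Fl_bounds:
  assumes "0 < z" "z < \<delta>" "z \<le> t" "t \<le> mu_ratio * z"
  shows "0 \<le> xdFl z" "xdFl z \<le> P * Fl l z" "0 \<le> Fl l z" "Fl l z \<le> c2 * t powr p"
    "Fl_ratio * (c2 * t powr p) \<le> Fl l z"
proof -
  have F: "c1 * z powr p \<le> Fl l z" "Fl l z \<le> c2 * z powr p"
    using Fl_powr assms unfolding p_def by auto
  show "0 \<le> xdFl z" "xdFl z \<le> P * Fl l z"
    using Fl_logderiv[OF assms(1,2)] by (auto simp: xdFl_def P_def)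
  show "0 \<le> Fl l z" using F c assms by (smt (verit) mult_pos_pos powr_gt_zero)
  have "z powr p \<le> t powr p" using assms p_ge_1 by (intro powr_mono2) auto
  then show "Fl l z \<le> c2 * t powr p" using F c by (smt (verit) mult_left_mono)
  have "t / mu_ratio \<le> z" using assms mu_ratio_ge_1 by (simp add: divide_le_eq mult.commute)
  then have "(t / mu_ratio) powr p \<le> z powr p" using assms p_ge_1 mu_ratio_ge_1 by (intro powr_mono2) auto
  then have "c1 * (t / mu_ratio) powr p \<le> c1 * z powr p" using c by simp
  moreover have "c1 * (t / mu_ratio) powr p = Fl_ratio * (c2 * t powr p)"
    using c mu_ratio_ge_1 by (simp add: Fl_ratio_def powr_divide field_simps)
  ultimately show "Fl_ratio * (c2 * t powr p) \<le> Fl l z" using F by linarith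
qed

lemma mu_in_range:
  assumes "admissible s x y"
  shows "0 < mu1 s x y" "mu1 s x y < \<delta>" "mu1 s x y \<le> mu_max s" "mu_max s \<le> mu_ratio * mu1 s x y"
    "0 < mu2 s x y" "mu2 s x y < \<delta>" "mu2 s x y \<le> mu_max s" "mu_max s \<le> mu_ratio * mu2 s x y"
    "0 < mu3 s x y" "mu3 s x y < \<delta>" "mu3 s x y \<le> mu_max s" "mu_max s \<le> mu_ratio * mu3 s x y"
  using assms abs_aniso_le[of x B y] Q_exp_bounds[of "aniso1 x y" s] Q_exp_bounds[of "aniso2 x y" s]
    Q_exp_bounds[of "aniso3 x y" s]
  unfolding admissible_def mu1_def mu2_def mu3_def by auto

lemma mu_max_small:
  assumes "admissible s x y"
  shows "mu_max s \<le> 1" "c2 * mu_max s powr p \<le> 1"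
proof -
  show "mu_max s \<le> 1" using assms mu_thr by (simp add: admissible_def)
  then have "mu_max s powr p \<le> mu_max s" using mu_max_pos p_ge_1 by (intro powr_le_one_le) auto
  also have "\<dots> \<le> 1 / c2" using assms mu_thr by (simp add: admissible_def)
  finally show "c2 * mu_max s powr p \<le> 1" using c by (simp add: field_simps)
qed

lemma small_args_at_admissible:
  assumes "admissible s x y"
  shows "small_args (mu1 s x y) (mu2 s x y) (mu3 s x y) (Fl l (mu1 s x y)) (Fl l (mu2 s x y)) (Fl l (mu3 s x y))
    (xdFl (mu1 s x y)) (xdFl (mu2 s x y)) (xdFl (mu3 s x y)) (mu_max s) (c2 * mu_max s powr p) P"
  using mu_in_range[OF assms] mu_max_small[OF assms] P_nonneg
    Fl_bounds[of "mu1 s x y" "mu_max s"] Fl_bounds[of "mu2 s x y" "mu_max s"] Fl_bounds[of "mu3 s x y" "mu_max s"]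
  by unfold_locales auto

lemma mu_max_cube_le:
  assumes "admissible s x y"
  shows "mu_max s ^ 3 * (c2 * mu_max s powr p) \<le> mu_max s"
proof -
  have "mu_max s ^ 2 * (c2 * mu_max s powr p) \<le> 1 * 1"
    using mu_max_small[OF assms] mu_max_pos[of s] c by (intro mult_mono) (auto intro: power_le_one)
  then have "mu_max s * (mu_max s ^ 2 * (c2 * mu_max s powr p)) \<le> mu_max s * 1"
    using mu_max_pos by (intro mult_left_mono) (auto simp: less_imp_le)
  then show ?thesis by (simp add: power3_eq_cube power2_eq_square algebra_simps)
qed

lemma abs_dW_le:
  assumes "admissible s x y" "\<bar>a1\<bar> \<le> 2" "\<bar>a2\<bar> \<le> 2" "\<bar>a3\<bar> \<le> 2"
  shows "\<bar>dW a1 a2 a3 s x y\<bar> \<le> C_dW * mu_max s"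
proof -
  have "\<bar>dW a1 a2 a3 s x y\<bar> \<le> C_dW * (mu_max s ^ 3 * (c2 * mu_max s powr p))"
    using small_args.abs_W_poly_deriv_le[OF small_args_at_admissible[OF assms(1)] assms(2-4), of j]
    unfolding dW_def C_dW_def by (simp add: mult.assoc)
  also have "\<dots> \<le> C_dW * mu_max s"
    using mu_max_cube_le[OF assms(1)] C_dW_nonneg by (rule mult_left_mono)
  finally show ?thesis .
qed

lemma abs_Wq_le:
  assumes "admissible s x y"
  shows "\<bar>Wq j l s x y\<bar> \<le> C_W * mu_max s"
proof -
  have "\<bar>Wq j l s x y\<bar> \<le> C_W * (mu_max s ^ 3 * (c2 * mu_max s powr p))"
    using small_args.abs_W_poly_le[OF small_args_at_admissible[OF assms], of j] unfolding Wq_eq_Wmu Wmu_eq_W_poly C_W_def mu1_def mu2_def mu3_def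
    by (simp add: mult.assoc)
  also have "\<dots> \<le> C_W * mu_max s"
    using mu_max_cube_le[OF assms] C_W_nonneg by (rule mult_left_mono)
  finally show ?thesis .
qed

text \<open>With \<open>t = mu_max s\<close> and \<open>\<phi> = c2 t\<^sup>p\<close>, the negative term \<open>-(3/2) \<mu>\<^sub>1 \<mu>\<^sub>2\<^sup>2 F\<^sub>l(\<mu>\<^sub>1)\<close> of
  \<open>W_poly_deriv_scaling_le\<close>, of order \<open>t\<^sup>3 \<phi>\<close>, dominates the error \<open>C_scaling t\<^sup>4 \<phi>\<^sup>2\<close> once \<open>t \<phi>\<close>
  is small; this is where the last bound in \<open>mu_thr\<close> comes from.\<close>

lemma scaling_main_term_ge:
  assumes "admissible s x y"
  shows "(mu_max s / mu_ratio) ^ 3 * (Fl_ratio * (c2 * mu_max s powr p))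
    \<le> mu1 s x y * mu2 s x y * (mu2 s x y * Fl l (mu1 s x y))"
proof -
  define t where "t = mu_max s"
  note r = mu_in_range[OF assms, folded t_def]
  have nonneg: "0 \<le> t / mu_ratio" using mu_max_pos[of s] mu_ratio_ge_1 by (simp add: t_def)
  have "t / mu_ratio \<le> mu1 s x y" "t / mu_ratio \<le> mu2 s x y"
    using r mu_ratio_ge_1 by (auto simp: divide_le_eq mult.commute)
  then have "(t / mu_ratio) * (t / mu_ratio) * (t / mu_ratio) \<le> mu1 s x y * mu2 s x y * mu2 s x y"
    using nonneg by (intro mult_mono) auto
  moreover have "Fl_ratio * (c2 * t powr p) \<le> Fl l (mu1 s x y)"
    using Fl_bounds(5)[OF r(1,2,3,4)] .
  ultimately have "(t / mu_ratio) ^ 3 * (Fl_ratio * (c2 * t powr p))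
      \<le> mu1 s x y * mu2 s x y * mu2 s x y * Fl l (mu1 s x y)"
    unfolding power3_eq_cube by (rule mult_mono) (use nonneg Fl_ratio_pos c r in auto)
  then show ?thesis by (simp add: t_def mult.assoc)
qed

lemma scaling_error_le:
  assumes "admissible s x y"
  shows "C_scaling * (mu_max s ^ 4 * (c2 * mu_max s powr p)^2)
    \<le> (3/2) * ((mu_max s / mu_ratio) ^ 3 * (Fl_ratio * (c2 * mu_max s powr p)))"
proof -
  define t \<phi> where "t = mu_max s" and "\<phi> = c2 * mu_max s powr p"
  have t: "0 < t" and \<phi>: "0 \<le> \<phi>" "\<phi> \<le> 1"
    using mu_max_pos[of s] mu_max_small[OF assms] c by (simp_all add: t_def \<phi>_def)
  have "t * \<phi> \<le> t" using t \<phi> by (simp add: mult_le_cancel_left1)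
  also have "\<dots> \<le> (3/2) * Fl_ratio / mu_ratio^3 / C_scaling"
    using assms mu_thr unfolding admissible_def t_def by linarith
  finally have "t * \<phi> * C_scaling \<le> (3/2) * Fl_ratio / mu_ratio^3"
    by (rule pos_le_divide_eq[OF C_scaling_pos, THEN iffD1])
  then have "(C_scaling * (t * \<phi>)) * (t^3 * \<phi>) \<le> ((3/2) * Fl_ratio / mu_ratio^3) * (t^3 * \<phi>)"
    using t \<phi> by (intro mult_right_mono) (auto simp: mult.commute)
  then show ?thesis
    unfolding \<phi>_def[symmetric] unfolding t_def[symmetric]
    by (simp add: power2_eq_square power3_eq_cube power4_eq_xxxx power_divide algebra_simps)
qed

lemma dW_scaling_nonpos:
  assumes "admissible s x y"
  shows "dW 1 1 1 s x y \<le> 0"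
proof -
  have "- (3/2) * (mu1 s x y * mu2 s x y * (mu2 s x y * Fl l (mu1 s x y)))
      + C_scaling * (mu_max s ^ 4 * (c2 * mu_max s powr p)^2) \<le> 0"
    using scaling_main_term_ge[OF assms] scaling_error_le[OF assms] by linarith
  then show ?thesis
    using small_args.W_poly_deriv_scaling_le[OF small_args_at_admissible[OF assms], of j]
    unfolding dW_def C_scaling_def
    by (smt (verit) mult_nonneg_nonpos zero_le_power2 mult_nonneg_nonneg)
qed

lemma Q_exp_has_real_derivative:
  assumes "(\<sigma> has_real_derivative \<sigma>') (at \<tau>)" "(E has_real_derivative e') (at \<tau>)"
  shows "((\<lambda>\<tau>. Q j (\<sigma> \<tau>) * exp (E \<tau>)) has_real_derivative
      (2 / sqrt 3 * \<sigma>' + e') * (Q j (\<sigma> \<tau>) * exp (E \<tau>))) (at \<tau>)"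
  unfolding Q_def using j by (auto intro!: derivative_eq_intros assms simp: field_simps)

lemma aniso_has_real_derivative:
  assumes "(x has_real_derivative x') (at \<tau>)" "(y has_real_derivative y') (at \<tau>)"
  shows "((\<lambda>\<tau>. aniso1 (x \<tau>) (y \<tau>)) has_real_derivative x' * (4 / sqrt 6) + y' * 0) (at \<tau>)"
    "((\<lambda>\<tau>. aniso2 (x \<tau>) (y \<tau>)) has_real_derivative x' * (- (2 / sqrt 6)) + y' * sqrt 2) (at \<tau>)"
    "((\<lambda>\<tau>. aniso3 (x \<tau>) (y \<tau>)) has_real_derivative x' * (- (2 / sqrt 6)) + y' * (- sqrt 2)) (at \<tau>)"
  unfolding aniso1_def aniso2_def aniso3_def
  by (auto intro!: derivative_eq_intros assms simp: field_simps)

lemma mu_has_real_derivative_along: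
  assumes "(\<sigma> has_real_derivative \<sigma>') (at \<tau>)" "(x has_real_derivative x') (at \<tau>)"
    "(y has_real_derivative y') (at \<tau>)"
  shows "((\<lambda>\<tau>. mu1 (\<sigma> \<tau>) (x \<tau>) (y \<tau>)) has_real_derivative
      (2 / sqrt 3 * \<sigma>' + x' * (4 / sqrt 6) + y' * 0) * mu1 (\<sigma> \<tau>) (x \<tau>) (y \<tau>)) (at \<tau>)"
    "((\<lambda>\<tau>. mu2 (\<sigma> \<tau>) (x \<tau>) (y \<tau>)) has_real_derivative
      (2 / sqrt 3 * \<sigma>' + x' * (- (2 / sqrt 6)) + y' * sqrt 2) * mu2 (\<sigma> \<tau>) (x \<tau>) (y \<tau>)) (at \<tau>)"
    "((\<lambda>\<tau>. mu3 (\<sigma> \<tau>) (x \<tau>) (y \<tau>)) has_real_derivative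
      (2 / sqrt 3 * \<sigma>' + x' * (- (2 / sqrt 6)) + y' * (- sqrt 2)) * mu3 (\<sigma> \<tau>) (x \<tau>) (y \<tau>)) (at \<tau>)"
  using aniso_has_real_derivative[OF assms(2,3), THEN Q_exp_has_real_derivative[OF assms(1)]]
  unfolding mu1_def mu2_def mu3_def by (simp_all only: add.assoc)

lemma Wq_has_real_derivative_along:
  assumes "(\<sigma> has_real_derivative \<sigma>') (at \<tau>)" "(x has_real_derivative x') (at \<tau>)"
    "(y has_real_derivative y') (at \<tau>)" "admissible (\<sigma> \<tau>) (x \<tau>) (y \<tau>)"
  shows "((\<lambda>\<tau>. Wq j l (\<sigma> \<tau>) (x \<tau>) (y \<tau>)) has_real_derivative
      2 / sqrt 3 * \<sigma>' * dW 1 1 1 (\<sigma> \<tau>) (x \<tau>) (y \<tau>)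
      + x' * dW_plus (\<sigma> \<tau>) (x \<tau>) (y \<tau>) + y' * dW_minus (\<sigma> \<tau>) (x \<tau>) (y \<tau>)) (at \<tau>)"
proof -
  note r = mu_in_range[OF assms(4)]
  note d = mu_has_real_derivative_along[OF assms(1-3)]
  have "((\<lambda>\<tau>. Wmu j l (mu1 (\<sigma> \<tau>) (x \<tau>) (y \<tau>)) (mu2 (\<sigma> \<tau>) (x \<tau>) (y \<tau>)) (mu3 (\<sigma> \<tau>) (x \<tau>) (y \<tau>)))
      has_real_derivative dW (2 / sqrt 3 * \<sigma>' + x' * (4 / sqrt 6) + y' * 0)
        (2 / sqrt 3 * \<sigma>' + x' * (- (2 / sqrt 6)) + y' * sqrt 2)
        (2 / sqrt 3 * \<sigma>' + x' * (- (2 / sqrt 6)) + y' * (- sqrt 2)) (\<sigma> \<tau>) (x \<tau>) (y \<tau>)) (at \<tau>)"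
    using Wmu_has_real_derivative[OF d Fl_deriv[OF r(1,2)] Fl_deriv[OF r(5,6)] Fl_deriv[OF r(9,10)]]
    unfolding dW_def xdFl_def .
  then show ?thesis
    unfolding Wq_eq_Wmu dW_def dW_plus_def dW_minus_def W_poly_deriv_linear mu1_def mu2_def mu3_def
    by simp
qed

lemma mu_max_has_real_derivative: "(mu_max has_real_derivative 2 / sqrt 3 * mu_max s) (at s)"
proof -
  have "mu_max = (\<lambda>s. Q j s * exp (3 * B))" by (simp add: fun_eq_iff mu_max_def)
  then show ?thesis
    using Q_exp_has_real_derivative[of "\<lambda>s. s" 1 s "\<lambda>_. 3 * B" 0] by simp
qed

lemma mu_max_mono: "s \<le> s' \<Longrightarrow> mu_max s \<le> mu_max s'"
  using j by (simp add: mu_max_def Q_def divide_right_mono)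

lemma mu_max_eventually_le:
  assumes "\<tau> > 0"
  obtains s where "s \<le> S" "mu_max s \<le> \<tau>"
proof
  define A where "A = exp (3 * B) / (2 * j)"
  have A: "A > 0" using j by (simp add: A_def)
  define s where "s = min S (sqrt 3 / 2 * ln (\<tau> / A))"
  show "s \<le> S" by (simp add: s_def)
  have "2 / sqrt 3 * s \<le> ln (\<tau> / A)" by (simp add: s_def field_simps)
  then have "exp (2 / sqrt 3 * s) \<le> \<tau> / A" using assms A by (metis exp_le_cancel_iff exp_ln divide_pos_pos)
  then show "mu_max s \<le> \<tau>" using A j by (simp add: mu_max_def Q_def A_def field_simps)
qed

lemma deriv_Wq_plus:
  assumes "admissible s x y"
  shows "deriv (\<lambda>x. Wq j l s x y) x = dW_plus s x y"
  using Wq_has_real_derivative_along[of "\<lambda>_. s" 0 x "\<lambda>x. x" 1 "\<lambda>_. y" 0] assms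
  by (auto intro!: DERIV_imp_deriv)

lemma deriv_Wq_minus:
  assumes "admissible s x y"
  shows "deriv (\<lambda>y. Wq j l s x y) y = dW_minus s x y"
  using Wq_has_real_derivative_along[of "\<lambda>_. s" 0 y "\<lambda>_. x" 0 "\<lambda>y. y" 1] assms
  by (auto intro!: DERIV_imp_deriv)

end

section \<open>Solutions that stay at bounded anisotropy\<close>

locale bounded_solution = collapse_regime +
  fixes qp qm pp pm :: "real \<Rightarrow> real" and S :: real
  assumes admissible: "\<And>s. s \<le> S \<Longrightarrow> admissible s (qp s) (qm s)"
    and h_pos: "\<And>s. s \<le> S \<Longrightarrow> hq j l s (qp s) (qm s) (pp s) (pm s) > 0"
    and qp_deriv: "\<And>s. s \<le> S \<Longrightarrow>
      (qp has_real_derivative pp s / (2 * sqrt (hq j l s (qp s) (qm s) (pp s) (pm s)))) (at s)"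
    and qm_deriv: "\<And>s. s \<le> S \<Longrightarrow>
      (qm has_real_derivative pm s / (2 * sqrt (hq j l s (qp s) (qm s) (pp s) (pm s)))) (at s)"
    and pp_deriv: "\<And>s. s \<le> S \<Longrightarrow>
      (pp has_real_derivative - dW_plus s (qp s) (qm s) / sqrt (hq j l s (qp s) (qm s) (pp s) (pm s))) (at s)"
    and pm_deriv: "\<And>s. s \<le> S \<Longrightarrow>
      (pm has_real_derivative - dW_minus s (qp s) (qm s) / sqrt (hq j l s (qp s) (qm s) (pp s) (pm s))) (at s)"
begin

definition "h s = hq j l s (qp s) (qm s) (pp s) (pm s)"

lemma h_has_real_derivative:
  assumes "s \<le> S"
  shows "(h has_real_derivative 4 / sqrt 3 * dW 1 1 1 s (qp s) (qm s)) (at s)"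
proof -
  have W: "((\<lambda>s. Wq j l s (qp s) (qm s)) has_real_derivative 2 / sqrt 3 * 1 * dW 1 1 1 s (qp s) (qm s)
      + pp s / (2 * sqrt (h s)) * dW_plus s (qp s) (qm s) + pm s / (2 * sqrt (h s)) * dW_minus s (qp s) (qm s))
      (at s)"
    unfolding h_def
    by (rule Wq_has_real_derivative_along[OF DERIV_ident qp_deriv[OF assms] qm_deriv[OF assms] admissible[OF assms]])
  have "h = (\<lambda>s. (pp s^2 + pm s^2) / 2 + 2 * Wq j l s (qp s) (qm s))"
    by (simp add: fun_eq_iff h_def hq_def)
  with energy_has_real_derivative[OF pp_deriv[OF assms, folded h_def] pm_deriv[OF assms, folded h_def] W]
  show ?thesis by simp
qed

lemma h_antimono:
  assumes "s \<le> s'" "s' \<le> S"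
  shows "h s' \<le> h s"
proof (rule deriv_nonpos_imp_antimono[OF _ _ assms(1)])
  fix \<sigma> assume "\<sigma> \<in> {s..s'}"
  then have "\<sigma> \<le> S" using assms by simp
  then show "(h has_real_derivative 4 / sqrt 3 * dW 1 1 1 \<sigma> (qp \<sigma>) (qm \<sigma>)) (at \<sigma>)"
    "4 / sqrt 3 * dW 1 1 1 \<sigma> (qp \<sigma>) (qm \<sigma>) \<le> 0"
    by (rule h_has_real_derivative, intro mult_nonneg_nonpos dW_scaling_nonpos admissible) simp_all
qed

definition "C_mom = C_dW / (sqrt (h S) * (2 / sqrt 3))"

lemma C_mom_nonneg: "C_mom \<ge> 0"
  using C_dW_nonneg h_pos[of S] by (simp add: C_mom_def h_def)

lemma abs_momentum_deriv_le:
  assumes "\<sigma> \<le> S" "\<bar>D\<bar> \<le> C_dW * mu_max \<sigma>"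
  shows "\<bar>- D / sqrt (h \<sigma>)\<bar> \<le> C_mom * (2 / sqrt 3 * mu_max \<sigma>)"
proof -
  have hS: "0 < sqrt (h S)" "sqrt (h S) \<le> sqrt (h \<sigma>)"
    using h_pos[of S] h_antimono[OF assms(1)] by (simp_all add: h_def)
  have "\<bar>- D / sqrt (h \<sigma>)\<bar> = \<bar>D\<bar> / sqrt (h \<sigma>)" using hS by (simp add: abs_div)
  also have "\<dots> \<le> \<bar>D\<bar> / sqrt (h S)" using hS by (intro divide_left_mono) auto
  also have "\<dots> \<le> C_dW * mu_max \<sigma> / sqrt (h S)" using assms(2) hS by (intro divide_right_mono) auto
  also have "\<dots> = C_mom * (2 / sqrt 3 * mu_max \<sigma>)" using hS by (simp add: C_mom_def field_simps)
  finally show ?thesis .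
qed

lemma momentum_increment_le:
  assumes "s \<le> s'" "s' \<le> S"
  shows "\<bar>pp s' - pp s\<bar> \<le> C_mom * mu_max s'" "\<bar>pm s' - pm s\<bar> \<le> C_mom * mu_max s'"
proof -
  have g: "((\<lambda>\<sigma>. C_mom * mu_max \<sigma>) has_real_derivative C_mom * (2 / sqrt 3 * mu_max \<sigma>)) (at \<sigma>)" for \<sigma>
    by (intro DERIV_cmult mu_max_has_real_derivative)
  have "C_mom * mu_max s \<ge> 0" using C_mom_nonneg mu_max_pos[of s] by simp
  moreover have "\<bar>pp s' - pp s\<bar> \<le> C_mom * mu_max s' - C_mom * mu_max s"
  proof (rule abs_diff_le_of_deriv_dominated[OF assms(1) _ g])
    fix \<sigma> assume "s \<le> \<sigma>" "\<sigma> \<le> s'"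
    then have "\<sigma> \<le> S" using assms by linarith
    then show "(pp has_real_derivative - dW_plus \<sigma> (qp \<sigma>) (qm \<sigma>) / sqrt (h \<sigma>)) (at \<sigma>)"
      using pp_deriv by (simp add: h_def)
    show "\<bar>- dW_plus \<sigma> (qp \<sigma>) (qm \<sigma>) / sqrt (h \<sigma>)\<bar> \<le> C_mom * (2 / sqrt 3 * mu_max \<sigma>)"
      using \<open>\<sigma> \<le> S\<close> abs_dW_le[OF admissible[OF \<open>\<sigma> \<le> S\<close>] abs_aniso_coeffs_le(1,2,2)]
      unfolding dW_plus_def by (rule abs_momentum_deriv_le)
  qed
  moreover have "\<bar>pm s' - pm s\<bar> \<le> C_mom * mu_max s' - C_mom * mu_max s"
  proof (rule abs_diff_le_of_deriv_dominated[OF assms(1) _ g])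
    fix \<sigma> assume "s \<le> \<sigma>" "\<sigma> \<le> s'"
    then have "\<sigma> \<le> S" using assms by linarith
    then show "(pm has_real_derivative - dW_minus \<sigma> (qp \<sigma>) (qm \<sigma>) / sqrt (h \<sigma>)) (at \<sigma>)"
      using pm_deriv by (simp add: h_def)
    show "\<bar>- dW_minus \<sigma> (qp \<sigma>) (qm \<sigma>) / sqrt (h \<sigma>)\<bar> \<le> C_mom * (2 / sqrt 3 * mu_max \<sigma>)"
      using \<open>\<sigma> \<le> S\<close> abs_dW_le[OF admissible[OF \<open>\<sigma> \<le> S\<close>] abs_aniso_coeffs_le(3-5)]
      unfolding dW_minus_def by (rule abs_momentum_deriv_le)
  qed
  ultimately show "\<bar>pp s' - pp s\<bar> \<le> C_mom * mu_max s'" "\<bar>pm s' - pm s\<bar> \<le> C_mom * mu_max s'"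
    by linarith+
qed

lemma momentum_sq_ge:
  assumes "s \<le> S" "4 * (C_W * mu_max s) \<le> h S"
  shows "h S \<le> pp s^2 + pm s^2"
proof -
  have "h S \<le> pp s^2 / 2 + pm s^2 / 2 + 2 * Wq j l s (qp s) (qm s)"
    using h_antimono[OF assms(1) order_refl] by (simp add: h_def hq_def add_divide_distrib)
  moreover have "Wq j l s (qp s) (qm s) \<le> C_W * mu_max s"
    using abs_Wq_le[OF admissible[OF assms(1)]] by simp
  ultimately show ?thesis using assms(2) by linarith
qed

lemma h_le_if_momentum_close:
  assumes "s \<le> s'" "s' \<le> S" "\<bar>pp s - a\<bar> \<le> \<eta>" "\<bar>pm s - b\<bar> \<le> \<eta>"
  shows "h s \<le> ((\<bar>a\<bar> + \<eta>)^2 + (\<bar>b\<bar> + \<eta>)^2) / 2 + 2 * (C_W * mu_max s')"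
proof -
  have "\<bar>pp s\<bar> \<le> \<bar>a\<bar> + \<eta>" "\<bar>pm s\<bar> \<le> \<bar>b\<bar> + \<eta>" using assms(3,4) by linarith+
  then have "pp s^2 \<le> (\<bar>a\<bar> + \<eta>)^2" "pm s^2 \<le> (\<bar>b\<bar> + \<eta>)^2"
    by (metis abs_ge_zero power2_abs power_mono)+
  moreover have "Wq j l s (qp s) (qm s) \<le> C_W * mu_max s'"
    using abs_Wq_le[OF admissible] mu_max_mono[OF assms(1)] C_W_nonneg assms
    by (smt (verit) mult_left_mono)
  ultimately show ?thesis unfolding h_def hq_def add_divide_distrib by linarith
qed

lemma drift_ge:
  assumes "s \<le> S" "\<bar>pp s - a\<bar> \<le> \<eta>" "\<bar>pm s - b\<bar> \<le> \<eta>" "16 * \<eta>^2 \<le> a^2 + b^2" "h s \<le> H"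
  shows "(a^2 + b^2) / (4 * sqrt H) \<le> a * (pp s / (2 * sqrt (h s))) + b * (pm s / (2 * sqrt (h s)))"
proof -
  have h: "0 < sqrt (h s)" "sqrt (h s) \<le> sqrt H" using h_pos[OF assms(1)] assms(5) by (simp_all add: h_def)
  have "(a^2 + b^2) / (4 * sqrt H) = ((a^2 + b^2) / 2) / (2 * sqrt H)" by simp
  also have "\<dots> \<le> ((a^2 + b^2) / 2) / (2 * sqrt (h s))" using h by (intro divide_left_mono) auto
  also have "\<dots> \<le> (a * pp s + b * pm s) / (2 * sqrt (h s))"
    using inner_ge_half_norm_sq_if_close[OF assms(2-4)] h by (intro divide_right_mono) auto
  also have "\<dots> = a * (pp s / (2 * sqrt (h s))) + b * (pm s / (2 * sqrt (h s)))"
    by (simp add: add_divide_distrib)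
  finally show ?thesis .
qed

lemma momenta_settle:
  obtains s0 a b \<eta> where "s0 \<le> S" "h S \<le> a^2 + b^2" "16 * \<eta>^2 \<le> a^2 + b^2"
    "\<And>s. s \<le> s0 \<Longrightarrow> \<bar>pp s - a\<bar> \<le> \<eta>" "\<And>s. s \<le> s0 \<Longrightarrow> \<bar>pm s - b\<bar> \<le> \<eta>"
proof -
  have hS: "h S > 0" using h_pos[of S] by (simp add: h_def)
  define \<tau> where "\<tau> = min (h S / (4 * C_W + 1)) (sqrt (h S) / (4 * C_mom + 1))"
  have "\<tau> > 0" using hS C_W_nonneg C_mom_nonneg by (simp add: \<tau>_def)
  then obtain s0 where s0: "s0 \<le> S" "mu_max s0 \<le> \<tau>" by (rule mu_max_eventually_le)
  define \<eta> where "\<eta> = C_mom * mu_max s0"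
  have "4 * (C_W * mu_max s0) \<le> h S"
    using s0(2) C_W_nonneg hS mu_max_pos[of s0] by (simp add: \<tau>_def field_simps)
  then have big: "h S \<le> pp s0^2 + pm s0^2" using momentum_sq_ge[OF s0(1)] by simp
  have "4 * \<eta> \<le> sqrt (h S)"
    using s0(2) C_mom_nonneg hS mu_max_pos[of s0] by (simp add: \<tau>_def \<eta>_def field_simps)
  moreover have "0 \<le> \<eta>" using C_mom_nonneg mu_max_pos[of s0] by (simp add: \<eta>_def)
  ultimately have "(4 * \<eta>)^2 \<le> h S" using hS by (metis power_mono real_sqrt_pow2 less_imp_le mult_nonneg_nonneg zero_le_numeral)
  then have "16 * \<eta>^2 \<le> pp s0^2 + pm s0^2" using big by (simp add: power_mult_distrib)
  moreover have "\<bar>pp s - pp s0\<bar> \<le> \<eta>" "\<bar>pm s - pm s0\<bar> \<le> \<eta>" if "s \<le> s0" for s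
    using momentum_increment_le[OF that s0(1)] by (auto simp: \<eta>_def abs_minus_commute)
  ultimately show ?thesis using that s0(1) big by blast
qed

lemma abs_position_combination_le:
  assumes "s \<le> S"
  shows "\<bar>a * qp s + b * qm s\<bar> \<le> (\<bar>a\<bar> + \<bar>b\<bar>) * B"
proof -
  have "\<bar>qp s\<bar> \<le> B" "\<bar>qm s\<bar> \<le> B" using admissible[OF assms] by (auto simp: admissible_def)
  then have "\<bar>a * qp s\<bar> \<le> \<bar>a\<bar> * B" "\<bar>b * qm s\<bar> \<le> \<bar>b\<bar> * B"
    by (simp_all add: abs_mult mult_left_mono)
  then show ?thesis by (simp add: abs_le_iff algebra_simps; linarith)
qed

lemma bounded_solution_absurd: False
proof -
  obtain s0 a b \<eta> where s0: "s0 \<le> S" and big: "h S \<le> a^2 + b^2" and small: "16 * \<eta>^2 \<le> a^2 + b^2"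
    and close: "\<And>s. s \<le> s0 \<Longrightarrow> \<bar>pp s - a\<bar> \<le> \<eta>" "\<And>s. s \<le> s0 \<Longrightarrow> \<bar>pm s - b\<bar> \<le> \<eta>"
    using momenta_settle by blast
  define H where "H = ((\<bar>a\<bar> + \<eta>)^2 + (\<bar>b\<bar> + \<eta>)^2) / 2 + 2 * (C_W * mu_max s0)"
  have h_le_H: "h s \<le> H" if "s \<le> s0" for s
    using h_le_if_momentum_close[OF that s0 close[OF that]] by (simp add: H_def)
  have "0 < h S" using h_pos[of S] by (simp add: h_def)
  moreover have "0 < H" using h_le_H[of s0] h_pos[OF s0] by (simp add: h_def)
  ultimately have "(a^2 + b^2) / (4 * sqrt H) > 0" using big by simp
  moreover have "((\<lambda>s. a * qp s + b * qm s) has_real_derivative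
      a * (pp s / (2 * sqrt (h s))) + b * (pm s / (2 * sqrt (h s)))) (at s)" if "s \<le> s0" for s
    using that s0 unfolding h_def by (intro DERIV_add DERIV_cmult qp_deriv qm_deriv) simp_all
  moreover have "(a^2 + b^2) / (4 * sqrt H) \<le> a * (pp s / (2 * sqrt (h s))) + b * (pm s / (2 * sqrt (h s)))"
    if "s \<le> s0" for s
    using that s0 by (intro drift_ge[OF _ close(1,2) small] h_le_H) simp_all
  ultimately have "\<not> (\<forall>s \<le> s0. \<bar>a * qp s + b * qm s\<bar> \<le> (\<bar>a\<bar> + \<bar>b\<bar>) * B)"
    by (intro not_bounded_if_deriv_ge_pos) auto
  with abs_position_combination_le s0 show False by auto
qed

end

context collapse_regime
begin

lemma no_bounded_solution:
  fixes q01 q02 :: real and qp qm pp pm :: "real \<Rightarrow> real"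
  assumes hpos: "\<And>t. t \<le> q01 \<Longrightarrow> hq j l t (qp t) (qm t) (pp t) (pm t) > 0"
    and dqp: "\<And>t. t \<le> q01 \<Longrightarrow>
       (qp has_real_derivative pp t / (2 * sqrt (hq j l t (qp t) (qm t) (pp t) (pm t)))) (at t within {..q01})"
    and dqm: "\<And>t. t \<le> q01 \<Longrightarrow>
       (qm has_real_derivative pm t / (2 * sqrt (hq j l t (qp t) (qm t) (pp t) (pm t)))) (at t within {..q01})"
    and dpp: "\<And>t. t \<le> q01 \<Longrightarrow>
       (pp has_real_derivative - deriv (\<lambda>x. Wq j l t x (qm t)) (qp t) / sqrt (hq j l t (qp t) (qm t) (pp t) (pm t)))
         (at t within {..q01})"
    and dpm: "\<And>t. t \<le> q01 \<Longrightarrow>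
       (pm has_real_derivative - deriv (\<lambda>x. Wq j l t (qp t) x) (qm t) / sqrt (hq j l t (qp t) (qm t) (pp t) (pm t)))
         (at t within {..q01})"
    and q02: "q02 \<le> q01" and bounded: "\<And>t. t \<le> q02 \<Longrightarrow> \<bar>qp t\<bar> \<le> B \<and> \<bar>qm t\<bar> \<le> B"
  shows False
proof -
  obtain S where S: "S \<le> q02 - 1" "mu_max S \<le> mu_thr"
    using mu_thr(1) by (rule mu_max_eventually_le)
  have adm: "admissible s (qp s) (qm s)" and lt: "s < q01" if "s \<le> S" for s
    using that S q02 bounded[of s] mu_max_mono[OF that] by (auto simp: admissible_def)
  interpret bounded_solution j l \<delta> c1 c2 B qp qm pp pm S
  proof (intro bounded_solution.intro collapse_regime_axioms bounded_solution_axioms.intro)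
    fix s assume s: "s \<le> S"
    then have "s \<le> q01" using lt by (simp add: less_imp_le)
    note at = has_real_derivative_at_within_atMost[OF _ lt[OF s]]
    show "admissible s (qp s) (qm s)" "hq j l s (qp s) (qm s) (pp s) (pm s) > 0"
      using adm[OF s] hpos[OF \<open>s \<le> q01\<close>] by auto
    show "(qp has_real_derivative pp s / (2 * sqrt (hq j l s (qp s) (qm s) (pp s) (pm s)))) (at s)"
      "(qm has_real_derivative pm s / (2 * sqrt (hq j l s (qp s) (qm s) (pp s) (pm s)))) (at s)"
      using at[OF dqp[OF \<open>s \<le> q01\<close>]] at[OF dqm[OF \<open>s \<le> q01\<close>]] .
    show "(pp has_real_derivative - dW_plus s (qp s) (qm s) / sqrt (hq j l s (qp s) (qm s) (pp s) (pm s))) (at s)"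
      "(pm has_real_derivative - dW_minus s (qp s) (qm s) / sqrt (hq j l s (qp s) (qm s) (pp s) (pm s))) (at s)"
      using at[OF dpp[OF \<open>s \<le> q01\<close>]] at[OF dpm[OF \<open>s \<le> q01\<close>]]
      unfolding deriv_Wq_plus[OF adm[OF s]] deriv_Wq_minus[OF adm[OF s]] .
  qed
  show False by (rule bounded_solution_absurd)
qed

end

lemma collapse_regime_exists:
  assumes "j \<ge> 1/2" "0 < l" "l < 1" "0 \<le> B"
  shows "\<exists>\<delta> c1 c2. collapse_regime j l \<delta> c1 c2 B"
proof (rule Fl_power_like_near_zero[OF assms(2,3)], goal_cases)
  case (1 \<delta> c1 c2)
  then have "collapse_regime j l \<delta> c1 c2 B" using assms by unfold_locales auto
  then show ?thesis by blast
qed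

theorem proposition1:
  fixes j l q01 :: real and qp qm pp pm :: "real \<Rightarrow> real"
  assumes hj: "\<exists>n::nat. n \<ge> 1 \<and> j = real n / 2"
    and hl: "0 < l" "l < 1"
    and hpos: "\<And>t. t \<le> q01 \<Longrightarrow> hq j l t (qp t) (qm t) (pp t) (pm t) > 0"
    and dqp: "\<And>t. t \<le> q01 \<Longrightarrow>
       (qp has_real_derivative pp t / (2 * sqrt (hq j l t (qp t) (qm t) (pp t) (pm t)))) (at t within {..q01})"
    and dqm: "\<And>t. t \<le> q01 \<Longrightarrow>
       (qm has_real_derivative pm t / (2 * sqrt (hq j l t (qp t) (qm t) (pp t) (pm t)))) (at t within {..q01})"
    and dpp: "\<And>t. t \<le> q01 \<Longrightarrow>
       (pp has_real_derivative - deriv (\<lambda>x. Wq j l t x (qm t)) (qp t) / sqrt (hq j l t (qp t) (qm t) (pp t) (pm t)))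
         (at t within {..q01})"
    and dpm: "\<And>t. t \<le> q01 \<Longrightarrow>
       (pm has_real_derivative - deriv (\<lambda>x. Wq j l t (qp t) x) (qm t) / sqrt (hq j l t (qp t) (qm t) (pp t) (pm t)))
         (at t within {..q01})"
  shows "\<not> (\<exists>q02 \<le> q01. \<exists>B. \<forall>t \<le> q02. sqrt ((qp t)^2 + (qm t)^2) \<le> B)"
proof
  assume "\<exists>q02 \<le> q01. \<exists>B. \<forall>t \<le> q02. sqrt ((qp t)^2 + (qm t)^2) \<le> B"
  then obtain q02 B where q02: "q02 \<le> q01" and R: "\<And>t. t \<le> q02 \<Longrightarrow> sqrt ((qp t)^2 + (qm t)^2) \<le> B"
    by blast
  have bounded: "\<bar>qp t\<bar> \<le> B \<and> \<bar>qm t\<bar> \<le> B" if "t \<le> q02" for t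
    using R[OF that] real_sqrt_ge_abs1[of "qp t" "qm t"] real_sqrt_ge_abs2[of "qm t" "qp t"] by linarith
  have "j \<ge> 1/2" using hj by auto
  moreover have "0 \<le> B" using bounded[of q02] by linarith
  ultimately obtain \<delta> c1 c2 where "collapse_regime j l \<delta> c1 c2 B"
    using hl collapse_regime_exists by blast
  then show False by (rule collapse_regime.no_bounded_solution[OF _ hpos dqp dqm dpp dpm q02 bounded])
qed

end
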